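(* Let $\tau=\tau_1\dotsm\tau_l$ be a weak composition with $l\ge 3$ and $\tau_1,\tau_2\ge 1$, and let $(G_1,u_1),\dots,(G_l,u_l)$ be rooted graphs. Let $G=S^\tau(G_1,\dots,G_l)$, and let $H=S^{\tau_3\dotsm\tau_l}(G_3,\dots,G_l)$, regarded as a rooted graph whose root is its center. Then \[ X_G=X_{S^{(\tau_1-1)\tau_2 1}(G_1,\,G_2,\,H)}+X_{G_1^{\tau_1-1}}\,X_{S^{\tau_2\dotsm\tau_l}(G_2,\dots,G_l)}-X_{P^{\tau_1+\tau_2-1}(G_1,G_2)}\,X_H. \]
   Context: All graphs are finite simple graphs. The chromatic symmetric function of a graph $G$ is $X_G=\sum_{\kappa}\prod_{v\in V(G)}x_{\kappa(v)}$, where $\kappa$ ranges over proper colorings $\kappa:V(G)\to\{1,2,\dots\}$. For a weak composition (sequence of nonnegative integers) $\tau=\tau_1\dotsm\tau_l$ and rooted graphs $(G_i,u_i)$, the spider-conjoined graph $S^\tau(G_1,\dots,G_l)$ is obtained as follows: take a center vertex $c$ and $l$ paths starting at $c$, pairwise disjoint except at $c$, the $i$-th of length $\tau_i$ with other end $s_i$ (so $s_i=c$ if $\tau_i=0$); then identify $u_i$ with $s_i$ for all $i$ (the $G_i$ being disjoint). Its center is $c$. For rooted graphs $(G,u)$, $(H,v)$ and $k\ge0$, $P^k(G,H)$ is obtained from the disjoint union of $G$ and $H$ by adding a path of length $k$ joining $u$ and $v$ (for $k=0$ identifying them), and $G^k=P^k(G,K_1)$ is $G$ with a pendant path of length $k$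 at its root. *)

theory Defs
  imports Main "HOL-Library.Multiset" "HOL-Library.FuncSet"
begin

type_synonym 'a graph = "'a set \<times> 'a set set"

definition verts :: "'a graph \<Rightarrow> 'a set" where "verts G = fst G"
definition edges :: "'a graph \<Rightarrow> 'a set set" where "edges G = snd G"

definition wf_graph :: "'a graph \<Rightarrow> bool" where
  "wf_graph G \<longleftrightarrow> finite (verts G) \<and> (\<forall>e\<in>edges G. e \<subseteq> verts G \<and> card e = 2)"

definition wf_rooted :: "'a graph \<times> 'a \<Rightarrow> bool" where
  "wf_rooted Gu \<longleftrightarrow> wf_graph (fst Gu) \<and> snd Gu \<in> verts (fst Gu)"

text \<open>A monomial in x_1, x_2, ... is represented by the multiset of the indices
  (with multiplicity); a (formal) symmetric function with integer coefficients is
  represented by its coefficient function.\<close>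

type_synonym sfun = "nat multiset \<Rightarrow> int"

definition proper_coloring :: "'a graph \<Rightarrow> ('a \<Rightarrow> nat) \<Rightarrow> bool" where
  "proper_coloring G \<kappa> \<longleftrightarrow>
     \<kappa> \<in> verts G \<rightarrow>\<^sub>E {1..} \<and>
     (\<forall>e\<in>edges G. \<forall>x\<in>e. \<forall>y\<in>e. x \<noteq> y \<longrightarrow> \<kappa> x \<noteq> \<kappa> y)"

definition csf :: "'a graph \<Rightarrow> sfun" where
  "csf G m = int (card {\<kappa>. proper_coloring G \<kappa> \<and> image_mset \<kappa> (mset_set (verts G)) = m})"

definition sf_times :: "sfun \<Rightarrow> sfun \<Rightarrow> sfun" where
  "sf_times f g m = (\<Sum>A\<in>{A. A \<subseteq># m}. f A * g (m - A))"

definition gmap :: "('a \<Rightarrow> 'b) \<Rightarrow> 'a graph \<Rightarrow> 'b graph" where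
  "gmap f G = (f ` verts G, (\<lambda>e. f ` e) ` edges G)"

type_synonym 'a svert = "(nat \<times> 'a) + (nat \<times> nat)"

text \<open>Vertex Inl (i, x): vertex x of the i-th graph (0-based);
  Inr (i, j): j-th vertex (distance j from the centre) of the i-th leg.\<close>

definition spider_center :: "'a svert" where "spider_center = Inr (0, 0)"

definition spider_base :: "nat list \<Rightarrow> ('a graph \<times> 'a) list \<Rightarrow> 'a svert graph" where
  "spider_base \<tau> Gs =
    ({Inl (i, x) | i x. i < length Gs \<and> x \<in> verts (fst (Gs ! i))}
       \<union> {Inr (i, j) | i j. i < length Gs \<and> j \<le> \<tau> ! i},
     {{Inl (i, x), Inl (i, y)} | i x y. i < length Gs \<and> {x, y} \<in> edges (fst (Gs ! i))}
       \<union> {{Inr (i, j), Inr (i, Suc j)} | i j. i < length Gs \<and> j < \<tau> ! i})"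

text \<open>Identification: the start of every leg becomes the centre, the end of the i-th leg
  is identified with the root u_i (so u_i becomes the centre if \<tau>_i = 0).\<close>
fun spider_glue :: "nat list \<Rightarrow> ('a graph \<times> 'a) list \<Rightarrow> 'a svert \<Rightarrow> 'a svert" where
  "spider_glue \<tau> Gs (Inl (i, x)) =
     (if i < length Gs \<and> x = snd (Gs ! i) \<and> \<tau> ! i = 0 then spider_center else Inl (i, x))"
| "spider_glue \<tau> Gs (Inr (i, j)) =
     (if j = 0 then spider_center
      else if j = \<tau> ! i then Inl (i, snd (Gs ! i)) else Inr (i, j))"

text \<open>The spider-conjoined graph S^\<tau>(G_1,...,G_l), l = length Gs = length \<tau>,
  with centre spider_center.\<close>
definition spider :: "nat list \<Rightarrow> ('a graph \<times> 'a) list \<Rightarrow> 'a svert graph" where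
  "spider \<tau> Gs =
    (let B = gmap (spider_glue \<tau> Gs) (spider_base \<tau> Gs)
     in (insert spider_center (verts B), edges B))"

text \<open>P^k(G,H): disjoint union of G (as Inl (0, _)) and H (as Inl (1, _)) plus a path
  Inr (0, 0), ..., Inr (0, k) from u to v (identifying u and v if k = 0).\<close>
definition path_base :: "nat \<Rightarrow> 'a graph \<times> 'a \<Rightarrow> 'a graph \<times> 'a \<Rightarrow> 'a svert graph" where
  "path_base k Gu Hv =
    ({Inl (0, x) | x. x \<in> verts (fst Gu)} \<union> {Inl (1, y) | y. y \<in> verts (fst Hv)}
       \<union> {Inr (0, j) | j. j \<le> k},
     {{Inl (0, x), Inl (0, y)} | x y. {x, y} \<in> edges (fst Gu)}
       \<union> {{Inl (1, x), Inl (1, y)} | x y. {x, y} \<in> edges (fst Hv)}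
       \<union> {{Inr (0, j), Inr (0, Suc j)} | j. j < k})"

fun path_glue :: "nat \<Rightarrow> 'a graph \<times> 'a \<Rightarrow> 'a graph \<times> 'a \<Rightarrow> 'a svert \<Rightarrow> 'a svert" where
  "path_glue k Gu Hv (Inl (i, x)) =
     (if i = 1 \<and> x = snd Hv \<and> k = 0 then Inl (0, snd Gu) else Inl (i, x))"
| "path_glue k Gu Hv (Inr (i, j)) =
     (if j = 0 then Inl (0, snd Gu)
      else if j = k then Inl (1, snd Hv) else Inr (i, j))"

definition Pk :: "nat \<Rightarrow> 'a graph \<times> 'a \<Rightarrow> 'a graph \<times> 'a \<Rightarrow> 'a svert graph" where
  "Pk k Gu Hv = gmap (path_glue k Gu Hv) (path_base k Gu Hv)"

text \<open>K_1 rooted at its unique vertex, and G^k = P^k(G, K_1).\<close>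
definition K1 :: "'a graph \<times> 'a" where "K1 = (({undefined}, {}), undefined)"

definition pendant :: "nat \<Rightarrow> 'a graph \<times> 'a \<Rightarrow> 'a svert graph" where
  "pendant k Gu = Pk k Gu K1"

definition rmap :: "('a \<Rightarrow> 'b) \<Rightarrow> 'a graph \<times> 'a \<Rightarrow> 'b graph \<times> 'b" where
  "rmap f Gu = (gmap f (fst Gu), f (snd Gu))"

end

theory Submission
  imports Defs
begin

(* Write c for the centre of S = S^tau(G_1, ..., G_l), a and b for its neighbours on the first two
   legs, and R for the edges of S other than ca and cb.  All graphs in the statement are, up to
   relabelling, graphs on the vertex set of S: S = R + ca + cb, the spider T is R + ca + ab, the graph
   R + cb is the disjoint union of G_1^(tau_1 - 1) and S^(tau_2 ... tau_l)(G_2, ..., G_l), and R + ab is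
   the disjoint union of P^(tau_1 + tau_2 - 1)(G_1, G_2) and H.  For a proper colouring k of R with
   k c = k a, the conditions k a ~= k b and k c ~= k b coincide, so counting colourings gives
   X_(R+ca+cb) + X_(R+ab) = X_(R+ca+ab) + X_(R+cb), and X of a disjoint union is the product. *)

section \<open>Chromatic symmetric functions of relations\<close>

definition colorings :: "'a set \<Rightarrow> ('a \<Rightarrow> 'a \<Rightarrow> bool) \<Rightarrow> nat multiset \<Rightarrow> ('a \<Rightarrow> nat) set" where
  "colorings V R m = {\<kappa> \<in> V \<rightarrow>\<^sub>E {1..}.
     (\<forall>x\<in>V. \<forall>y\<in>V. R x y \<longrightarrow> \<kappa> x \<noteq> \<kappa> y) \<and> image_mset \<kappa> (mset_set V) = m}"

definition csf_rel :: "'a set \<Rightarrow> ('a \<Rightarrow> 'a \<Rightarrow> bool) \<Rightarrow> sfun" where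
  "csf_rel V R m = int (card (colorings V R m))"

definition add_edge :: "('a \<Rightarrow> 'a \<Rightarrow> bool) \<Rightarrow> 'a \<Rightarrow> 'a \<Rightarrow> 'a \<Rightarrow> 'a \<Rightarrow> bool" where
  "add_edge R p q x y \<longleftrightarrow> R x y \<or> x = p \<and> y = q \<or> x = q \<and> y = p"

lemma colorings_extensional: "\<kappa> \<in> colorings V R m \<Longrightarrow> x \<notin> V \<Longrightarrow> \<kappa> x = undefined"
  by (auto simp: colorings_def PiE_def extensional_def)

lemma finite_colorings:
  assumes "finite V"
  shows "finite (colorings V R m)"
proof (rule finite_subset)
  show "colorings V R m \<subseteq> V \<rightarrow>\<^sub>E set_mset m"
    using assms by (fastforce simp: colorings_def PiE_def extensional_def)
  show "finite (V \<rightarrow>\<^sub>E set_mset m)"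
    by (rule finite_PiE) (use assms in auto)
qed

lemma csf_rel_cong:
  "(\<And>x y. x \<in> V \<Longrightarrow> y \<in> V \<Longrightarrow> R x y = S x y) \<Longrightarrow> csf_rel V R = csf_rel V S"
  unfolding csf_rel_def colorings_def by (intro ext arg_cong[where f = "\<lambda>X. int (card X)"]) auto

lemma restrict_comp_colorings:
  assumes fin: "finite V" and f: "bij_betw f V W"
    and R: "\<And>x y. x \<in> V \<Longrightarrow> y \<in> V \<Longrightarrow> R x y \<Longrightarrow> S (f x) (f y)"
    and \<kappa>: "\<kappa> \<in> colorings W S m"
  shows "restrict (\<kappa> \<circ> f) V \<in> colorings V R m"
proof -
  have "image_mset (restrict (\<kappa> \<circ> f) V) (mset_set V) = image_mset (\<kappa> \<circ> f) (mset_set V)"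
    by (rule image_mset_cong) (use fin in simp)
  also have "\<dots> = image_mset \<kappa> (image_mset f (mset_set V))"
    by (simp add: multiset.map_comp)
  also have "image_mset f (mset_set V) = mset_set W"
    using f by (simp add: bij_betw_def image_mset_mset_set)
  also have "image_mset \<kappa> (mset_set W) = m"
    using \<kappa> by (simp add: colorings_def)
  finally have "image_mset (restrict (\<kappa> \<circ> f) V) (mset_set V) = m" .
  moreover have "f x \<in> W" if "x \<in> V" for x
    using f that by (auto simp: bij_betw_def)
  ultimately show ?thesis
    using \<kappa> R unfolding colorings_def by (auto simp: PiE_iff)
qed

lemma csf_rel_iso:
  assumes fin: "finite V"
    and f: "\<And>x. x \<in> V \<Longrightarrow> f x \<in> W" and g: "\<And>y. y \<in> W \<Longrightarrow> g y \<in> V"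
    and gf: "\<And>x. x \<in> V \<Longrightarrow> g (f x) = x" and fg: "\<And>y. y \<in> W \<Longrightarrow> f (g y) = y"
    and RS: "\<And>x y. x \<in> V \<Longrightarrow> y \<in> V \<Longrightarrow> R x y \<Longrightarrow> S (f x) (f y)"
    and SR: "\<And>x y. x \<in> W \<Longrightarrow> y \<in> W \<Longrightarrow> S x y \<Longrightarrow> R (g x) (g y)"
  shows "csf_rel V R = csf_rel W S"
proof
  fix m
  have bf: "bij_betw f V W" and bg: "bij_betw g W V"
    using f g gf fg by (auto intro!: bij_betwI)
  have finW: "finite W" using bf fin bij_betw_finite by blast
  have "bij_betw (\<lambda>\<kappa>. restrict (\<kappa> \<circ> f) V) (colorings W S m) (colorings V R m)"
  proof (rule bij_betw_byWitness[where f' = "\<lambda>\<kappa>. restrict (\<kappa> \<circ> g) W"])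
    show "\<forall>\<kappa>\<in>colorings W S m. restrict (restrict (\<kappa> \<circ> f) V \<circ> g) W = \<kappa>"
      using g fg by (auto simp: restrict_def colorings_extensional)
    show "\<forall>\<kappa>\<in>colorings V R m. restrict (restrict (\<kappa> \<circ> g) W \<circ> f) V = \<kappa>"
      using f gf by (auto simp: restrict_def colorings_extensional)
    show "(\<lambda>\<kappa>. restrict (\<kappa> \<circ> f) V) ` colorings W S m \<subseteq> colorings V R m"
      using restrict_comp_colorings[OF fin bf] RS by blast
    show "(\<lambda>\<kappa>. restrict (\<kappa> \<circ> g) W) ` colorings V R m \<subseteq> colorings W S m"
      using restrict_comp_colorings[OF finW bg] SR by blast
  qed
  then show "csf_rel V R m = csf_rel W S m"
    unfolding csf_rel_def by (simp add: bij_betw_same_card)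
qed

lemma finite_submultisets: "finite {A. A \<subseteq># M}"
proof (rule finite_subset)
  show "{A. A \<subseteq># M} \<subseteq> (\<Union>n\<le>size M. multisets_of_size (set_mset M) n)"
    by (auto simp: multisets_of_size_def dest: set_mset_mono size_mset_mono)
qed auto

lemma restrict_colorings:
  assumes "\<kappa> \<in> colorings V R m" "U \<subseteq> V" "finite V"
  shows "restrict \<kappa> U \<in> colorings U R (image_mset \<kappa> (mset_set U))"
proof -
  have "finite U"
    using assms finite_subset by blast
  then have "image_mset (restrict \<kappa> U) (mset_set U) = image_mset \<kappa> (mset_set U)"
    by (auto intro: image_mset_cong)
  then show ?thesis
    using assms unfolding colorings_def by auto
qed

lemma merge_colorings:
  assumes fin: "finite V" "finite W" and disj: "V \<inter> W = {}"
    and sep: "\<And>x y. x \<in> V \<union> W \<Longrightarrow> y \<in> V \<union> W \<Longrightarrow> R x y \<Longrightarrow> x \<in> V \<longleftrightarrow> y \<in> V"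
    and \<kappa>: "\<kappa> \<in> colorings V R A" and \<kappa>': "\<kappa>' \<in> colorings W R B"
  shows "(\<lambda>x. if x \<in> V then \<kappa> x else \<kappa>' x) \<in> colorings (V \<union> W) R (A + B)"
proof -
  let ?\<mu> = "\<lambda>x. if x \<in> V then \<kappa> x else \<kappa>' x"
  have "image_mset ?\<mu> (mset_set V) = image_mset \<kappa> (mset_set V)"
    by (rule image_mset_cong) (use fin in simp)
  moreover have "image_mset ?\<mu> (mset_set W) = image_mset \<kappa>' (mset_set W)"
    by (rule image_mset_cong) (use fin disj in auto)
  ultimately have "image_mset ?\<mu> (mset_set (V \<union> W)) = A + B"
    using \<kappa> \<kappa>' by (simp add: mset_set_Union[OF fin disj] colorings_def)
  moreover have "?\<mu> x \<noteq> ?\<mu> y" if "x \<in> V \<union> W" "y \<in> V \<union> W" "R x y" for x y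
    using sep[OF that] that \<kappa> \<kappa>' by (auto simp: colorings_def)
  ultimately show ?thesis
    using \<kappa> \<kappa>' disj by (auto simp: colorings_def PiE_iff extensional_def)
qed

lemma bij_betw_colorings_disjoint_Un:
  assumes fin: "finite V" "finite W" and disj: "V \<inter> W = {}"
    and sep: "\<And>x y. x \<in> V \<union> W \<Longrightarrow> y \<in> V \<union> W \<Longrightarrow> R x y \<Longrightarrow> x \<in> V \<longleftrightarrow> y \<in> V"
  shows "bij_betw (\<lambda>\<kappa>. (image_mset \<kappa> (mset_set V), restrict \<kappa> V, restrict \<kappa> W))
           (colorings (V \<union> W) R m)
           (SIGMA A:{A. A \<subseteq># m}. colorings V R A \<times> colorings W R (m - A))"
    (is "bij_betw ?split ?C ?P")
proof (rule bij_betwI[where g = "\<lambda>(A, \<kappa>, \<kappa>'). (\<lambda>x. if x \<in> V then \<kappa> x else \<kappa>' x)"])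
  show "?split \<in> ?C \<rightarrow> ?P"
  proof
    fix \<kappa> assume \<kappa>: "\<kappa> \<in> ?C"
    then have "m = image_mset \<kappa> (mset_set V) + image_mset \<kappa> (mset_set W)"
      by (simp add: colorings_def mset_set_Union[OF fin disj])
    then show "?split \<kappa> \<in> ?P"
      using restrict_colorings[OF \<kappa>] fin by auto
  qed
  show "(\<lambda>(A, \<kappa>, \<kappa>'). (\<lambda>x. if x \<in> V then \<kappa> x else \<kappa>' x)) \<in> ?P \<rightarrow> ?C"
    using merge_colorings[OF fin disj sep] by (force simp: subset_mset.add_diff_inverse)
  show "(\<lambda>(A, \<kappa>, \<kappa>'). (\<lambda>x. if x \<in> V then \<kappa> x else \<kappa>' x)) (?split \<kappa>) = \<kappa>" if "\<kappa> \<in> ?C" for \<kappa>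
    using colorings_extensional[OF that] by auto
  show "?split ((\<lambda>(A, \<kappa>, \<kappa>'). (\<lambda>x. if x \<in> V then \<kappa> x else \<kappa>' x)) p) = p" if "p \<in> ?P" for p
  proof -
    obtain A \<kappa> \<kappa>' where p: "p = (A, \<kappa>, \<kappa>')" and \<kappa>: "\<kappa> \<in> colorings V R A"
      and \<kappa>': "\<kappa>' \<in> colorings W R (m - A)"
      using \<open>p \<in> ?P\<close> by auto
    have "image_mset (\<lambda>x. if x \<in> V then \<kappa> x else \<kappa>' x) (mset_set V) = image_mset \<kappa> (mset_set V)"
      by (rule image_mset_cong) (use fin in simp)
    also have "\<dots> = A"
      using \<kappa> by (simp add: colorings_def)
    moreover have "restrict (\<lambda>x. if x \<in> V then \<kappa> x else \<kappa>' x) V = \<kappa>"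
      using colorings_extensional[OF \<kappa>] by fastforce
    moreover have "restrict (\<lambda>x. if x \<in> V then \<kappa> x else \<kappa>' x) W = \<kappa>'"
      using colorings_extensional[OF \<kappa>'] disj by fastforce
    ultimately show ?thesis
      unfolding p by simp
  qed
qed

lemma csf_rel_disjoint_Un:
  assumes fin: "finite V" "finite W" and disj: "V \<inter> W = {}"
    and sep: "\<And>x y. x \<in> V \<union> W \<Longrightarrow> y \<in> V \<union> W \<Longrightarrow> R x y \<Longrightarrow> x \<in> V \<longleftrightarrow> y \<in> V"
  shows "csf_rel (V \<union> W) R m = sf_times (csf_rel V R) (csf_rel W R) m"
proof -
  have "card (colorings (V \<union> W) R m)
      = card (SIGMA A:{A. A \<subseteq># m}. colorings V R A \<times> colorings W R (m - A))"
    by (rule bij_betw_same_card[OF bij_betw_colorings_disjoint_Un[OF assms]])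
  also have "\<dots> = (\<Sum>A | A \<subseteq># m. card (colorings V R A) * card (colorings W R (m - A)))"
    using fin by (simp add: finite_submultisets finite_colorings card_cartesian_product)
  finally show ?thesis
    by (simp add: csf_rel_def sf_times_def)
qed

lemma colorings_add_edge:
  "p \<in> V \<Longrightarrow> q \<in> V \<Longrightarrow> colorings V (add_edge R p q) m = {\<kappa> \<in> colorings V R m. \<kappa> p \<noteq> \<kappa> q}"
  unfolding colorings_def add_edge_def by auto

lemma csf_rel_add_edge_exchange:
  assumes fin: "finite V" and "a \<in> V" "b \<in> V" "c \<in> V"
  shows "csf_rel V (add_edge (add_edge R c a) c b) m + csf_rel V (add_edge R a b) m
       = csf_rel V (add_edge (add_edge R c a) a b) m + csf_rel V (add_edge R c b) m"
proof -
  let ?C = "colorings V R m"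
  have split: "card {\<kappa> \<in> ?C. P \<kappa>} = card {\<kappa> \<in> ?C. P \<kappa> \<and> \<kappa> c \<noteq> \<kappa> a} + card {\<kappa> \<in> ?C. P \<kappa> \<and> \<kappa> c = \<kappa> a}"
    for P
  proof -
    have "{\<kappa> \<in> ?C. P \<kappa>} = {\<kappa> \<in> ?C. P \<kappa> \<and> \<kappa> c \<noteq> \<kappa> a} \<union> {\<kappa> \<in> ?C. P \<kappa> \<and> \<kappa> c = \<kappa> a}"
      by auto
    then show ?thesis
      by (simp add: card_Un_disjoint finite_colorings[OF fin] disjoint_iff)
  qed
  have "colorings V (add_edge (add_edge R c a) c b) m = {\<kappa> \<in> ?C. \<kappa> c \<noteq> \<kappa> b \<and> \<kappa> c \<noteq> \<kappa> a}"
    "colorings V (add_edge (add_edge R c a) a b) m = {\<kappa> \<in> ?C. \<kappa> a \<noteq> \<kappa> b \<and> \<kappa> c \<noteq> \<kappa> a}"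
    "colorings V (add_edge R a b) m = {\<kappa> \<in> ?C. \<kappa> a \<noteq> \<kappa> b}"
    "colorings V (add_edge R c b) m = {\<kappa> \<in> ?C. \<kappa> c \<noteq> \<kappa> b}"
    using assms by (auto simp: colorings_add_edge)
  moreover
  \<comment> \<open>when \<open>\<kappa> c = \<kappa> a\<close>, the conditions \<open>\<kappa> a \<noteq> \<kappa> b\<close> and \<open>\<kappa> c \<noteq> \<kappa> b\<close> coincide\<close>
  have "{\<kappa> \<in> ?C. \<kappa> a \<noteq> \<kappa> b \<and> \<kappa> c = \<kappa> a} = {\<kappa> \<in> ?C. \<kappa> c \<noteq> \<kappa> b \<and> \<kappa> c = \<kappa> a}"
    by auto
  ultimately show ?thesis
    unfolding csf_rel_def using split[of "\<lambda>\<kappa>. \<kappa> a \<noteq> \<kappa> b"] split[of "\<lambda>\<kappa>. \<kappa> c \<noteq> \<kappa> b"] by simp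
qed

section \<open>Graphs, spiders and paths\<close>

definition adj :: "'a graph \<Rightarrow> 'a \<Rightarrow> 'a \<Rightarrow> bool" where
  "adj G x y \<longleftrightarrow> (\<exists>e\<in>edges G. x \<in> e \<and> y \<in> e \<and> x \<noteq> y)"

text \<open>Gluing vertices may collapse an edge to a loop, so \<open>wf_graph\<close> is not preserved by \<open>gmap\<close>;
  this weaker invariant is.\<close>
definition pair_graph :: "'a graph \<Rightarrow> bool" where
  "pair_graph G \<longleftrightarrow> (\<forall>e\<in>edges G. e \<subseteq> verts G \<and> (\<exists>x y. e = {x, y}))"

lemma adj_irrefl [simp]: "\<not> adj G x x"
  by (simp add: adj_def)

lemma adj_sym: "adj G x y \<Longrightarrow> adj G y x"
  unfolding adj_def by blast

lemma wf_graph_imp_pair_graph: "wf_graph G \<Longrightarrow> pair_graph G"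
  unfolding wf_graph_def pair_graph_def by (metis card_2_iff)

lemma adj_in_verts: "pair_graph G \<Longrightarrow> adj G x y \<Longrightarrow> x \<in> verts G \<and> y \<in> verts G"
  unfolding pair_graph_def adj_def by blast

lemma adj_pair_graph_iff: "pair_graph G \<Longrightarrow> adj G x y \<longleftrightarrow> {x, y} \<in> edges G \<and> x \<noteq> y"
  unfolding pair_graph_def adj_def by (metis doubleton_eq_iff insertCI insertE singletonD)

lemma csf_eq_csf_rel:
  assumes "pair_graph G"
  shows "csf G = csf_rel (verts G) (adj G)"
proof
  fix m
  have "proper_coloring G \<kappa> \<longleftrightarrow> \<kappa> \<in> verts G \<rightarrow>\<^sub>E {1..} \<and> (\<forall>x\<in>verts G. \<forall>y\<in>verts G. adj G x y \<longrightarrow> \<kappa> x \<noteq> \<kappa> y)"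
    for \<kappa>
    using adj_in_verts[OF assms] unfolding proper_coloring_def adj_def by blast
  then show "csf G m = csf_rel (verts G) (adj G) m"
    unfolding csf_def csf_rel_def colorings_def by (metis (no_types, lifting) mem_Collect_eq)
qed

lemma csf_eq_csf_rel_iso:
  assumes "pair_graph G" "finite W"
    and "\<And>v. v \<in> W \<Longrightarrow> f v \<in> verts G" "\<And>p. p \<in> verts G \<Longrightarrow> g p \<in> W"
    and "\<And>v. v \<in> W \<Longrightarrow> g (f v) = v" "\<And>p. p \<in> verts G \<Longrightarrow> f (g p) = p"
    and "\<And>v w. v \<in> W \<Longrightarrow> w \<in> W \<Longrightarrow> R v w \<Longrightarrow> adj G (f v) (f w)"
    and "\<And>p q. p \<in> verts G \<Longrightarrow> q \<in> verts G \<Longrightarrow> adj G p q \<Longrightarrow> R (g p) (g q)"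
  shows "csf G = csf_rel W R"
  using csf_rel_iso[of W f "verts G" g R "adj G", OF assms(2-)] csf_eq_csf_rel[OF assms(1)] by simp

lemma verts_gmap [simp]: "verts (gmap f G) = f ` verts G"
  by (simp add: gmap_def verts_def)

lemma edges_gmap [simp]: "edges (gmap f G) = image f ` edges G"
  by (simp add: gmap_def edges_def)

lemma adj_gmap: "adj (gmap f G) p q \<longleftrightarrow> (\<exists>x y. adj G x y \<and> p = f x \<and> q = f y \<and> p \<noteq> q)"
  unfolding adj_def by auto

lemma pair_graph_gmap: "pair_graph G \<Longrightarrow> pair_graph (gmap f G)"
  unfolding pair_graph_def by (fastforce simp: image_subset_iff)

lemma rmap_simps [simp]: "fst (rmap f Gu) = gmap f (fst Gu)" "snd (rmap f Gu) = f (snd Gu)"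
  by (simp_all add: rmap_def)

lemma verts_spider: "verts (spider \<tau> Gs) = insert spider_center (spider_glue \<tau> Gs ` verts (spider_base \<tau> Gs))"
  by (simp add: spider_def Let_def verts_def gmap_def)

lemma adj_spider: "adj (spider \<tau> Gs) p q \<longleftrightarrow>
    (\<exists>x y. adj (spider_base \<tau> Gs) x y \<and> p = spider_glue \<tau> Gs x \<and> q = spider_glue \<tau> Gs y \<and> p \<noteq> q)"
  unfolding spider_def Let_def adj_def edges_def gmap_def by auto

lemma adj_spiderI:
  "adj (spider_base \<tau> Gs) x y \<Longrightarrow> spider_glue \<tau> Gs x \<noteq> spider_glue \<tau> Gs y \<Longrightarrow>
    adj (spider \<tau> Gs) (spider_glue \<tau> Gs x) (spider_glue \<tau> Gs y)"
  unfolding adj_spider by blast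

lemma verts_spider_base: "x \<in> verts (spider_base \<tau> Gs) \<longleftrightarrow>
    (\<exists>i x0. x = Inl (i, x0) \<and> i < length Gs \<and> x0 \<in> verts (fst (Gs ! i))) \<or>
    (\<exists>i j. x = Inr (i, j) \<and> i < length Gs \<and> j \<le> \<tau> ! i)"
  by (auto simp: spider_base_def verts_def)

lemma adj_spider_base:
  assumes "\<And>i. i < length Gs \<Longrightarrow> pair_graph (fst (Gs ! i))"
  shows "adj (spider_base \<tau> Gs) x y \<longleftrightarrow>
    (\<exists>i x0 y0. i < length Gs \<and> adj (fst (Gs ! i)) x0 y0 \<and> x = Inl (i, x0) \<and> y = Inl (i, y0)) \<or>
    (\<exists>i j. i < length Gs \<and> j < \<tau> ! i \<and>
       (x = Inr (i, j) \<and> y = Inr (i, Suc j) \<or> x = Inr (i, Suc j) \<and> y = Inr (i, j)))"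
    (is "_ \<longleftrightarrow> ?graph \<or> ?leg")
proof
  assume "adj (spider_base \<tau> Gs) x y"
  then obtain e where e: "e \<in> edges (spider_base \<tau> Gs)" "x \<in> e" "y \<in> e" "x \<noteq> y"
    unfolding adj_def by blast
  from e(1) consider
      (graph) i x0 y0 where "e = {Inl (i, x0), Inl (i, y0)}" "i < length Gs" "{x0, y0} \<in> edges (fst (Gs ! i))"
    | (leg) i j where "e = {Inr (i, j), Inr (i, Suc j)}" "i < length Gs" "j < \<tau> ! i"
    unfolding spider_base_def edges_def by auto
  then show "?graph \<or> ?leg"
  proof cases
    case graph
    then have "adj (fst (Gs ! i)) x0 y0" "adj (fst (Gs ! i)) y0 x0"
      using e unfolding adj_def by auto
    then show ?thesis using graph e by auto
  qed (use e in auto)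
next
  assume "?graph \<or> ?leg"
  then have "{x, y} \<in> edges (spider_base \<tau> Gs) \<and> x \<noteq> y"
    using adj_pair_graph_iff[OF assms] unfolding spider_base_def edges_def by (auto simp: insert_commute)
  then show "adj (spider_base \<tau> Gs) x y"
    unfolding adj_def by blast
qed

lemma pair_graph_spider:
  assumes "\<And>i. i < length Gs \<Longrightarrow> pair_graph (fst (Gs ! i))"
  shows "pair_graph (spider \<tau> Gs)"
proof -
  have "pair_graph (spider_base \<tau> Gs)"
    using assms unfolding pair_graph_def spider_base_def edges_def verts_def by fastforce
  then have "pair_graph (gmap (spider_glue \<tau> Gs) (spider_base \<tau> Gs))"
    by (rule pair_graph_gmap)
  then show ?thesis
    by (auto simp: pair_graph_def spider_def Let_def verts_def edges_def)
qed

lemma finite_verts_spider: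
  assumes "\<And>i. i < length Gs \<Longrightarrow> finite (verts (fst (Gs ! i)))"
  shows "finite (verts (spider \<tau> Gs))"
proof -
  have "verts (spider_base \<tau> Gs)
      \<subseteq> (\<Union>i<length Gs. (\<lambda>x. Inl (i, x)) ` verts (fst (Gs ! i)) \<union> (\<lambda>j. Inr (i, j)) ` {..\<tau> ! i})"
    by (force simp: verts_spider_base)
  then have "finite (verts (spider_base \<tau> Gs))"
    by (rule finite_subset) (use assms in auto)
  then show ?thesis
    by (simp add: verts_spider)
qed

lemma verts_spider_iff:
  assumes roots: "\<And>i. i < length Gs \<Longrightarrow> snd (Gs ! i) \<in> verts (fst (Gs ! i))"
  shows "p \<in> verts (spider \<tau> Gs) \<longleftrightarrow> p = spider_center \<or>
    (\<exists>i x. p = Inl (i, x) \<and> i < length Gs \<and> x \<in> verts (fst (Gs ! i)) \<and> \<not> (x = snd (Gs ! i) \<and> \<tau> ! i = 0)) \<or>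
    (\<exists>i j. p = Inr (i, j) \<and> i < length Gs \<and> 0 < j \<and> j < \<tau> ! i)"
    (is "_ \<longleftrightarrow> ?rhs")
proof
  assume "p \<in> verts (spider \<tau> Gs)"
  then consider "p = spider_center" | x where "x \<in> verts (spider_base \<tau> Gs)" "p = spider_glue \<tau> Gs x"
    unfolding verts_spider by blast
  then show ?rhs
  proof cases
    case 2
    then show ?thesis
      using roots unfolding verts_spider_base
      by (auto simp: spider_center_def split: if_splits)
  qed simp
next
  assume ?rhs
  then show "p \<in> verts (spider \<tau> Gs)"
  proof (elim disjE exE conjE)
    fix i x assume "p = Inl (i, x)" "i < length Gs" "x \<in> verts (fst (Gs ! i))" "\<not> (x = snd (Gs ! i) \<and> \<tau> ! i = 0)"
    then show ?thesis
      unfolding verts_spider by (intro insertI2 rev_image_eqI[of "Inl (i, x)"]) (auto simp: verts_spider_base)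
  next
    fix i j assume "p = Inr (i, j)" "i < length Gs" "0 < j" "j < \<tau> ! i"
    then show ?thesis
      unfolding verts_spider by (intro insertI2 rev_image_eqI[of "Inr (i, j)"]) (auto simp: verts_spider_base)
  qed (simp add: verts_spider)
qed

lemma adj_Pk: "adj (Pk k Gu Hv) p q \<longleftrightarrow>
    (\<exists>x y. adj (path_base k Gu Hv) x y \<and> p = path_glue k Gu Hv x \<and> q = path_glue k Gu Hv y \<and> p \<noteq> q)"
  unfolding Pk_def by (rule adj_gmap)

lemma adj_PkI:
  "adj (path_base k Gu Hv) x y \<Longrightarrow> path_glue k Gu Hv x \<noteq> path_glue k Gu Hv y \<Longrightarrow>
    adj (Pk k Gu Hv) (path_glue k Gu Hv x) (path_glue k Gu Hv y)"
  unfolding adj_Pk by blast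

lemma verts_path_base: "x \<in> verts (path_base k Gu Hv) \<longleftrightarrow>
    (\<exists>x0. x = Inl (0, x0) \<and> x0 \<in> verts (fst Gu)) \<or> (\<exists>y0. x = Inl (1, y0) \<and> y0 \<in> verts (fst Hv)) \<or>
    (\<exists>j. x = Inr (0, j) \<and> j \<le> k)"
  by (auto simp: path_base_def verts_def)

lemma adj_path_base:
  assumes "pair_graph (fst Gu)" "pair_graph (fst Hv)"
  shows "adj (path_base k Gu Hv) x y \<longleftrightarrow>
    (\<exists>x0 y0. adj (fst Gu) x0 y0 \<and> x = Inl (0, x0) \<and> y = Inl (0, y0)) \<or>
    (\<exists>x0 y0. adj (fst Hv) x0 y0 \<and> x = Inl (1, x0) \<and> y = Inl (1, y0)) \<or>
    (\<exists>j. j < k \<and> (x = Inr (0, j) \<and> y = Inr (0, Suc j) \<or> x = Inr (0, Suc j) \<and> y = Inr (0, j)))"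
    (is "_ \<longleftrightarrow> ?rhs")
proof
  assume "adj (path_base k Gu Hv) x y"
  then obtain e where e: "e \<in> edges (path_base k Gu Hv)" "x \<in> e" "y \<in> e" "x \<noteq> y"
    unfolding adj_def by blast
  from e(1) consider
      (left) x0 y0 where "e = {Inl (0, x0), Inl (0, y0)}" "{x0, y0} \<in> edges (fst Gu)"
    | (right) x0 y0 where "e = {Inl (1, x0), Inl (1, y0)}" "{x0, y0} \<in> edges (fst Hv)"
    | (path) j where "e = {Inr (0, j), Inr (0, Suc j)}" "j < k"
    unfolding path_base_def edges_def by auto
  then show ?rhs
  proof cases
    case left
    then have "adj (fst Gu) x0 y0" "adj (fst Gu) y0 x0"
      using e unfolding adj_def by auto
    then show ?thesis using left e by auto
  next
    case right
    then have "adj (fst Hv) x0 y0" "adj (fst Hv) y0 x0"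
      using e unfolding adj_def by auto
    then show ?thesis using right e by auto
  qed (use e in auto)
next
  assume ?rhs
  then have "{x, y} \<in> edges (path_base k Gu Hv) \<and> x \<noteq> y"
    using adj_pair_graph_iff[OF assms(1)] adj_pair_graph_iff[OF assms(2)]
    unfolding path_base_def edges_def by (auto simp: insert_commute)
  then show "adj (path_base k Gu Hv) x y"
    unfolding adj_def by blast
qed

lemma pair_graph_Pk: "pair_graph (fst Gu) \<Longrightarrow> pair_graph (fst Hv) \<Longrightarrow> pair_graph (Pk k Gu Hv)"
  unfolding Pk_def
  by (rule pair_graph_gmap) (fastforce simp: pair_graph_def path_base_def edges_def verts_def)

lemma verts_Pk_iff:
  assumes "snd Gu \<in> verts (fst Gu)" "snd Hv \<in> verts (fst Hv)"
  shows "p \<in> verts (Pk k Gu Hv) \<longleftrightarrow> (\<exists>x. p = Inl (0, x) \<and> x \<in> verts (fst Gu)) \<or>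
    (\<exists>y. p = Inl (1, y) \<and> y \<in> verts (fst Hv) \<and> \<not> (y = snd Hv \<and> k = 0)) \<or>
    (\<exists>j. p = Inr (0, j) \<and> 0 < j \<and> j < k)"
    (is "_ \<longleftrightarrow> ?rhs")
proof
  assume "p \<in> verts (Pk k Gu Hv)"
  then obtain x where "x \<in> verts (path_base k Gu Hv)" "p = path_glue k Gu Hv x"
    by (auto simp: Pk_def)
  then show ?rhs
    using assms unfolding verts_path_base by (auto split: if_splits)
next
  assume ?rhs
  then show "p \<in> verts (Pk k Gu Hv)"
  proof (elim disjE exE conjE)
    fix x assume "p = Inl (0, x)" "x \<in> verts (fst Gu)"
    then show ?thesis
      unfolding Pk_def by (auto intro!: rev_image_eqI[of "Inl (0, x)"] simp: verts_path_base)
  next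
    fix y assume "p = Inl (1, y)" "y \<in> verts (fst Hv)" "\<not> (y = snd Hv \<and> k = 0)"
    then show ?thesis
      unfolding Pk_def by (auto intro!: rev_image_eqI[of "Inl (1, y)"] simp: verts_path_base)
  next
    fix j assume "p = Inr (0, j)" "0 < j" "j < k"
    then show ?thesis
      unfolding Pk_def by (auto intro!: rev_image_eqI[of "Inr (0, j)"] simp: verts_path_base)
  qed
qed

lemma K1_simps [simp]: "verts (fst K1) = {undefined}" "edges (fst K1) = {}" "snd K1 = undefined"
  by (simp_all add: K1_def verts_def edges_def)

lemma pair_graph_K1: "pair_graph (fst K1)"
  by (simp add: pair_graph_def)

lemma not_adj_K1 [simp]: "\<not> adj (fst K1) x y"
  by (simp add: adj_def)

section \<open>The outer legs of a spider\<close>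

lemma svert_cases [case_names Inl Inr, cases type]:
  obtains (Inl) i x where "v = Inl (i, x)" | (Inr) i j where "v = Inr (i, j)"
  by (cases v) auto

text \<open>The centre \<open>Inr (0, 0)\<close> of a spider has \<open>leg\<close> 0, so it must be excluded explicitly when
  legs are selected by their index.\<close>
definition leg :: "'a svert \<Rightarrow> nat" where
  "leg v = (case v of Inl (i, _) \<Rightarrow> i | Inr (i, _) \<Rightarrow> i)"

lemma leg_simps [simp]: "leg (Inl (i, x)) = i" "leg (Inr (i, j)) = i"
  by (simp_all add: leg_def)

definition shift :: "nat \<Rightarrow> 'a svert \<Rightarrow> 'a svert" where
  "shift d v = (case v of Inl (i, x) \<Rightarrow> Inl (i + d, x) | Inr (i, j) \<Rightarrow> Inr (i + d, j))"

text \<open>\<open>shift_vert d\<close> relabels \<open>spider (drop d \<tau>) (drop d Gs)\<close> as the centre together with the legs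
  \<open>d, d + 1, \<dots>\<close> of \<open>spider \<tau> Gs\<close>; \<open>unshift_vert d\<close> is its inverse there.\<close>
definition shift_vert :: "nat \<Rightarrow> 'a svert \<Rightarrow> 'a svert" where
  "shift_vert d v = (if v = spider_center then spider_center else shift d v)"

definition unshift_vert :: "nat \<Rightarrow> 'a svert \<Rightarrow> 'a svert" where
  "unshift_vert d v = (case v of Inl (i, x) \<Rightarrow> Inl (i - d, x)
     | Inr (i, j) \<Rightarrow> if j = 0 then spider_center else Inr (i - d, j))"

lemma shift_simps [simp]: "shift d (Inl (i, x)) = Inl (i + d, x)" "shift d (Inr (i, j)) = Inr (i + d, j)"
  by (simp_all add: shift_def)

lemma unshift_vert_simps [simp]:
  "unshift_vert d (Inl (i, x)) = Inl (i - d, x)"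
  "unshift_vert d (Inr (i, j)) = (if j = 0 then spider_center else Inr (i - d, j))"
  by (simp_all add: unshift_vert_def)

locale spider_graph =
  fixes \<tau> :: "nat list" and Gs :: "('a graph \<times> 'a) list"
  assumes length_eq: "length \<tau> = length Gs"
    and wf_pieces: "\<forall>Gu\<in>set Gs. wf_rooted Gu"
begin

abbreviation "S \<equiv> spider \<tau> Gs"
abbreviation "V \<equiv> verts S"
abbreviation "glue \<equiv> spider_glue \<tau> Gs"
abbreviation "c \<equiv> (spider_center :: 'a svert)"

lemma piece_wf: "i < length Gs \<Longrightarrow> wf_graph (fst (Gs ! i)) \<and> snd (Gs ! i) \<in> verts (fst (Gs ! i))"
  using wf_pieces by (auto simp: wf_rooted_def)

lemma pair_graph_piece: "i < length Gs \<Longrightarrow> pair_graph (fst (Gs ! i))"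
  using piece_wf wf_graph_imp_pair_graph by blast

lemma root_in_piece: "i < length Gs \<Longrightarrow> snd (Gs ! i) \<in> verts (fst (Gs ! i))"
  using piece_wf by blast

lemma V_iff: "p \<in> V \<longleftrightarrow> p = c \<or>
    (\<exists>i x. p = Inl (i, x) \<and> i < length Gs \<and> x \<in> verts (fst (Gs ! i)) \<and> \<not> (x = snd (Gs ! i) \<and> \<tau> ! i = 0)) \<or>
    (\<exists>i j. p = Inr (i, j) \<and> i < length Gs \<and> 0 < j \<and> j < \<tau> ! i)"
  using verts_spider_iff root_in_piece by blast

lemma finite_V: "finite V"
  using finite_verts_spider piece_wf by (auto simp: wf_graph_def)

lemma adj_spider_base_iff: "adj (spider_base \<tau> Gs) x y \<longleftrightarrow>
    (\<exists>i x0 y0. i < length Gs \<and> adj (fst (Gs ! i)) x0 y0 \<and> x = Inl (i, x0) \<and> y = Inl (i, y0)) \<or>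
    (\<exists>i j. i < length Gs \<and> j < \<tau> ! i \<and>
       (x = Inr (i, j) \<and> y = Inr (i, Suc j) \<or> x = Inr (i, Suc j) \<and> y = Inr (i, j)))"
  using adj_spider_base pair_graph_piece by blast

lemma pair_graph_S: "pair_graph S"
  using pair_graph_spider pair_graph_piece by blast

lemma leg_glue: "glue x \<noteq> c \<Longrightarrow> leg (glue x) = leg x"
  by (cases x rule: svert_cases) (auto split: if_splits)

lemma shift_of_leg_ge: "d \<le> leg x \<Longrightarrow> \<exists>x'. x = shift d x'"
proof (cases x rule: svert_cases)
  case (Inl i y)
  moreover assume "d \<le> leg x"
  ultimately show ?thesis
    by (intro exI[of _ "Inl (i - d, y)"]) simp
next
  case (Inr i j)
  moreover assume "d \<le> leg x"
  ultimately show ?thesis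
    by (intro exI[of _ "Inr (i - d, j)"]) simp
qed

definition outer :: "nat \<Rightarrow> 'a svert set" where
  "outer d = {v \<in> V. v = c \<or> d \<le> leg v}"

definition inner :: "nat \<Rightarrow> 'a svert set" where
  "inner d = {v \<in> V. v \<noteq> c \<and> leg v < d}"

lemma csf_rel_inner_outer:
  assumes "\<And>v w. v \<in> V \<Longrightarrow> w \<in> V \<Longrightarrow> R v w \<Longrightarrow> v \<in> inner d \<longleftrightarrow> w \<in> inner d"
  shows "csf_rel V R m = sf_times (csf_rel (inner d) R) (csf_rel (outer d) R) m"
proof -
  have "V = inner d \<union> outer d"
    by (auto simp: inner_def outer_def)
  moreover have "csf_rel (inner d \<union> outer d) R m = sf_times (csf_rel (inner d) R) (csf_rel (outer d) R) m"
  proof (rule csf_rel_disjoint_Un)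
    fix v w assume "v \<in> inner d \<union> outer d" "w \<in> inner d \<union> outer d" "R v w"
    moreover from this have "v \<in> V" "w \<in> V"
      by (auto simp: inner_def outer_def)
    ultimately show "v \<in> inner d \<longleftrightarrow> w \<in> inner d"
      using assms by blast
  qed (use finite_V in \<open>auto simp: inner_def outer_def\<close>)
  ultimately show ?thesis
    by simp
qed

context
  fixes d :: nat
  assumes d_le: "d \<le> length Gs"
begin

abbreviation "S' \<equiv> spider (drop d \<tau>) (drop d Gs)"
abbreviation "glue' \<equiv> spider_glue (drop d \<tau>) (drop d Gs)"

lemma nth_drop_pieces [simp]: "drop d Gs ! i = Gs ! (i + d)" "drop d \<tau> ! i = \<tau> ! (i + d)"
  using d_le length_eq by (simp_all add: nth_drop add.commute)

lemma verts_S'_iff: "p \<in> verts S' \<longleftrightarrow> p = c \<or>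
    (\<exists>i x. p = Inl (i, x) \<and> i + d < length Gs \<and> x \<in> verts (fst (Gs ! (i + d))) \<and>
       \<not> (x = snd (Gs ! (i + d)) \<and> \<tau> ! (i + d) = 0)) \<or>
    (\<exists>i j. p = Inr (i, j) \<and> i + d < length Gs \<and> 0 < j \<and> j < \<tau> ! (i + d))"
  using d_le by (subst verts_spider_iff) (auto intro: root_in_piece)

lemma outer_iff: "v \<in> outer d \<longleftrightarrow> v = c \<or>
    (\<exists>i x. v = Inl (i + d, x) \<and> i + d < length Gs \<and> x \<in> verts (fst (Gs ! (i + d))) \<and>
       \<not> (x = snd (Gs ! (i + d)) \<and> \<tau> ! (i + d) = 0)) \<or>
    (\<exists>i j. v = Inr (i + d, j) \<and> i + d < length Gs \<and> 0 < j \<and> j < \<tau> ! (i + d))"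
  unfolding outer_def V_iff by (auto simp: spider_center_def) (metis le_add_diff_inverse2)+

lemma adj_S'_base_iff: "adj (spider_base (drop d \<tau>) (drop d Gs)) x y \<longleftrightarrow>
    (\<exists>i x0 y0. i + d < length Gs \<and> adj (fst (Gs ! (i + d))) x0 y0 \<and> x = Inl (i, x0) \<and> y = Inl (i, y0)) \<or>
    (\<exists>i j. i + d < length Gs \<and> j < \<tau> ! (i + d) \<and>
       (x = Inr (i, j) \<and> y = Inr (i, Suc j) \<or> x = Inr (i, Suc j) \<and> y = Inr (i, j)))"
  using d_le by (subst adj_spider_base) (auto intro: pair_graph_piece)

lemma adj_base_shift_iff:
  "adj (spider_base \<tau> Gs) (shift d x) (shift d y) \<longleftrightarrow> adj (spider_base (drop d \<tau>) (drop d Gs)) x y"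
  unfolding adj_spider_base_iff adj_S'_base_iff
  by (cases x rule: svert_cases; cases y rule: svert_cases) (auto simp: add.commute, blast+)

lemma shift_vert_glue': "shift_vert d (glue' x) = glue (shift d x)"
  by (cases x rule: svert_cases) (auto simp: shift_vert_def spider_center_def)

lemma unshift_shift_vert_glue': "unshift_vert d (shift_vert d (glue' x)) = glue' x"
  by (cases x rule: svert_cases) (auto simp: shift_vert_def spider_center_def)

lemma shift_vert_in_outer: "p \<in> verts S' \<Longrightarrow> shift_vert d p \<in> outer d"
  unfolding verts_S'_iff outer_iff by (auto simp: shift_vert_def spider_center_def)

lemma unshift_vert_in_S': "v \<in> outer d \<Longrightarrow> unshift_vert d v \<in> verts S'"
  unfolding verts_S'_iff outer_iff by (auto simp: spider_center_def)

lemma unshift_shift_vert: "p \<in> verts S' \<Longrightarrow> unshift_vert d (shift_vert d p) = p"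
  unfolding verts_S'_iff by (auto simp: shift_vert_def spider_center_def)

lemma shift_unshift_vert: "v \<in> outer d \<Longrightarrow> shift_vert d (unshift_vert d v) = v"
  unfolding outer_iff by (auto simp: shift_vert_def spider_center_def)

lemma adj_S'_imp_adj_S:
  assumes "adj S' p q"
  shows "adj S (shift_vert d p) (shift_vert d q)"
proof -
  obtain x y where xy: "adj (spider_base (drop d \<tau>) (drop d Gs)) x y" "p = glue' x" "q = glue' y" "p \<noteq> q"
    using assms unfolding adj_spider by blast
  have "shift_vert d p \<noteq> shift_vert d q"
    using xy(2-4) unshift_shift_vert_glue'[of x] unshift_shift_vert_glue'[of y] by auto
  moreover have "adj (spider_base \<tau> Gs) (shift d x) (shift d y)"
    using xy(1) adj_base_shift_iff by simp
  ultimately show ?thesis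
    unfolding adj_spider xy(2,3) shift_vert_glue' by blast
qed

lemma adj_S_imp_adj_S':
  assumes v: "v \<in> outer d" and w: "w \<in> outer d" and "adj S v w"
  shows "adj S' (unshift_vert d v) (unshift_vert d w)"
proof -
  obtain x y where xy: "adj (spider_base \<tau> Gs) x y" "v = glue x" "w = glue y" "v \<noteq> w"
    using assms unfolding adj_spider by blast
  have same_leg: "leg x = leg y"
    using xy(1) unfolding adj_spider_base_iff by auto
  have "d \<le> leg x"
  proof (cases "v = c")
    case True
    then have "w \<noteq> c" using xy(4) by simp
    then show ?thesis
      using w xy(3) same_leg leg_glue unfolding outer_def by auto
  next
    case False
    then show ?thesis
      using v xy(2) leg_glue unfolding outer_def by auto
  qed
  then obtain x' y' where x': "x = shift d x'" and y': "y = shift d y'"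
    using same_leg shift_of_leg_ge by metis
  have "adj (spider_base (drop d \<tau>) (drop d Gs)) x' y'"
    using xy(1) adj_base_shift_iff unfolding x' y' by simp
  moreover have "unshift_vert d v = glue' x'" "unshift_vert d w = glue' y'"
    unfolding xy(2,3) x' y' shift_vert_glue'[symmetric] unshift_shift_vert_glue' by simp_all
  moreover have "glue' x' \<noteq> glue' y'"
    using xy(2-4) unfolding x' y' shift_vert_glue'[symmetric] by auto
  ultimately show ?thesis
    unfolding adj_spider by auto
qed

lemma csf_spider_drop: "csf S' = csf_rel (outer d) (adj S)"
proof (rule csf_eq_csf_rel_iso[where f = "unshift_vert d" and g = "shift_vert d"])
  show "pair_graph S'"
    using d_le by (intro pair_graph_spider) (auto intro: pair_graph_piece)
  show "finite (outer d)"
    using finite_V by (simp add: outer_def)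
qed (use unshift_vert_in_S' shift_vert_in_outer unshift_shift_vert shift_unshift_vert
       adj_S_imp_adj_S' adj_S'_imp_adj_S in auto)

end

end

section \<open>Exchanging the edge \<open>c b\<close> for \<open>a b\<close>\<close>

text \<open>Legs are numbered from 0, so legs 0 and 1 carry \<open>\<tau>\<^sub>1\<close> and \<open>\<tau>\<^sub>2\<close> of the statement; \<open>a\<close> and \<open>b\<close>
  are the neighbours of the centre \<open>c\<close> on them.\<close>
locale spider_split = spider_graph +
  assumes three_legs: "3 \<le> length \<tau>" and first_legs_pos: "1 \<le> \<tau> ! 0" "1 \<le> \<tau> ! 1"
begin

abbreviation "a \<equiv> glue (Inr (0, 1))"
abbreviation "b \<equiv> glue (Inr (1, 1))"

lemma three_pieces: "0 < length Gs" "1 < length Gs" "2 < length Gs"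
  using three_legs length_eq by auto

lemma a_b_c_in_V: "a \<in> V" "b \<in> V" "c \<in> V"
  using first_legs_pos three_pieces root_in_piece unfolding V_iff
  by (auto simp: spider_center_def)

lemma a_b_c_distinct: "c \<noteq> a" "c \<noteq> b" "a \<noteq> b"
  using first_legs_pos by (auto simp: spider_center_def)

lemma leg_a_b: "leg a = 0" "leg b = 1"
  by simp_all

text \<open>The base edges of \<open>S\<close> other than the edges \<open>c a\<close> and \<open>c b\<close> starting the legs 0 and 1.\<close>
definition rest_base_adj :: "'a svert \<Rightarrow> 'a svert \<Rightarrow> bool" where
  "rest_base_adj x y \<longleftrightarrow>
    (\<exists>i x0 y0. i < length Gs \<and> adj (fst (Gs ! i)) x0 y0 \<and> x = Inl (i, x0) \<and> y = Inl (i, y0)) \<or>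
    (\<exists>i j. i < length Gs \<and> j < \<tau> ! i \<and> (2 \<le> i \<or> 1 \<le> j) \<and>
       (x = Inr (i, j) \<and> y = Inr (i, Suc j) \<or> x = Inr (i, Suc j) \<and> y = Inr (i, j)))"

definition rest_adj :: "'a svert \<Rightarrow> 'a svert \<Rightarrow> bool" where
  "rest_adj p q \<longleftrightarrow> (\<exists>x y. rest_base_adj x y \<and> p = glue x \<and> q = glue y \<and> p \<noteq> q)"

lemma rest_adjI: "rest_base_adj x y \<Longrightarrow> glue x \<noteq> glue y \<Longrightarrow> rest_adj (glue x) (glue y)"
  unfolding rest_adj_def by blast

lemma adj_spider_base_iff_rest: "adj (spider_base \<tau> Gs) x y \<longleftrightarrow> rest_base_adj x y \<or>
    x = Inr (0, 0) \<and> y = Inr (0, 1) \<or> x = Inr (0, 1) \<and> y = Inr (0, 0) \<or>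
    x = Inr (1, 0) \<and> y = Inr (1, 1) \<or> x = Inr (1, 1) \<and> y = Inr (1, 0)"
    (is "_ \<longleftrightarrow> _ \<or> ?first_edges")
proof
  assume "adj (spider_base \<tau> Gs) x y"
  then show "rest_base_adj x y \<or> ?first_edges"
    unfolding adj_spider_base_iff
  proof (elim disjE exE)
    fix i j assume ij: "i < length Gs \<and> j < \<tau> ! i \<and>
      (x = Inr (i, j) \<and> y = Inr (i, Suc j) \<or> x = Inr (i, Suc j) \<and> y = Inr (i, j))"
    show ?thesis
    proof (cases "2 \<le> i \<or> 1 \<le> j")
      case True
      then show ?thesis using ij unfolding rest_base_adj_def by blast
    next
      case False
      then have "i = 0 \<or> i = 1" "j = 0" by auto
      then show ?thesis using ij by auto
    qed
  qed (auto simp: rest_base_adj_def)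
next
  have first: "adj (spider_base \<tau> Gs) (Inr (i, 0)) (Inr (i, 1))" "adj (spider_base \<tau> Gs) (Inr (i, 1)) (Inr (i, 0))"
    if "i < 2" for i
    using that first_legs_pos three_pieces unfolding adj_spider_base_iff by (auto simp: less_2_cases_iff)
  assume "rest_base_adj x y \<or> ?first_edges"
  then show "adj (spider_base \<tau> Gs) x y"
  proof (elim disjE)
    assume "rest_base_adj x y"
    then show ?thesis
      unfolding rest_base_adj_def adj_spider_base_iff by blast
  qed (use first[of 0] first[of 1] in auto)
qed

lemma adj_S_eq: "adj S = add_edge (add_edge rest_adj c a) c b"
proof (intro ext iffI)
  fix p q
  assume "adj S p q"
  then obtain x y where xy: "adj (spider_base \<tau> Gs) x y" "p = glue x" "q = glue y" "p \<noteq> q"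
    unfolding adj_spider by blast
  from xy(1) show "add_edge (add_edge rest_adj c a) c b p q"
    unfolding adj_spider_base_iff_rest
  proof (elim disjE)
    assume "rest_base_adj x y"
    then show ?thesis
      using rest_adjI xy(2-4) unfolding add_edge_def by blast
  qed (use xy(2,3) in \<open>auto simp: add_edge_def spider_center_def\<close>)
next
  fix p q
  have "adj S c a" "adj S a c" "adj S c b" "adj S b c"
    using adj_spiderI[of \<tau> Gs "Inr (0, 0)" "Inr (0, 1)"] adj_spiderI[of \<tau> Gs "Inr (0, 1)" "Inr (0, 0)"]
      adj_spiderI[of \<tau> Gs "Inr (1, 0)" "Inr (1, 1)"] adj_spiderI[of \<tau> Gs "Inr (1, 1)" "Inr (1, 0)"]
      a_b_c_distinct
    unfolding adj_spider_base_iff_rest by (simp_all add: spider_center_def)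
  moreover have "adj S p q" if "rest_adj p q"
    using that adj_spiderI[of \<tau> Gs] unfolding rest_adj_def adj_spider_base_iff_rest by blast
  moreover assume "add_edge (add_edge rest_adj c a) c b p q"
  ultimately show "adj S p q"
    unfolding add_edge_def by blast
qed

lemma rest_base_adj_cases [consumes 1, case_names graph0 graph1 leg0 leg1 outer]:
  assumes "rest_base_adj x y"
  obtains (graph0) x0 y0 where "adj (fst (Gs ! 0)) x0 y0" "x = Inl (0, x0)" "y = Inl (0, y0)"
  | (graph1) x0 y0 where "adj (fst (Gs ! 1)) x0 y0" "x = Inl (1, x0)" "y = Inl (1, y0)"
  | (leg0) j where "1 \<le> j" "j < \<tau> ! 0"
      "x = Inr (0, j) \<and> y = Inr (0, Suc j) \<or> x = Inr (0, Suc j) \<and> y = Inr (0, j)"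
  | (leg1) j where "1 \<le> j" "j < \<tau> ! 1"
      "x = Inr (1, j) \<and> y = Inr (1, Suc j) \<or> x = Inr (1, Suc j) \<and> y = Inr (1, j)"
  | (outer) "2 \<le> leg x" "2 \<le> leg y"
proof -
  from assms consider
      (graph) i x0 y0 where "i < length Gs" "adj (fst (Gs ! i)) x0 y0" "x = Inl (i, x0)" "y = Inl (i, y0)"
    | (leg) i j where "i < length Gs" "j < \<tau> ! i" "2 \<le> i \<or> 1 \<le> j"
        "x = Inr (i, j) \<and> y = Inr (i, Suc j) \<or> x = Inr (i, Suc j) \<and> y = Inr (i, j)"
    unfolding rest_base_adj_def by blast
  then show ?thesis
  proof cases
    case (graph i x0 y0)
    consider "i = 0" | "i = 1" | "2 \<le> i"
      by linarith
    then show ?thesis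
      using graph that(1,2,5) by cases auto
  next
    case (leg i j)
    consider "i = 0" | "i = 1" | "2 \<le> i"
      by linarith
    then show ?thesis
      using leg that(3,4)[of j] that(5) by cases auto
  qed
qed

lemma glue_rest_ne_center:
  assumes "rest_base_adj x y" "leg x < 2"
  shows "glue x \<noteq> c \<and> glue y \<noteq> c"
  using assms(1)
proof (cases rule: rest_base_adj_cases)
  case (leg0 j)
  then show ?thesis by (auto simp: spider_center_def split: if_splits)
next
  case (leg1 j)
  then show ?thesis by (auto simp: spider_center_def split: if_splits)
next
  case outer
  then show ?thesis using assms(2) by simp
qed (use first_legs_pos in \<open>auto simp: spider_center_def\<close>)

lemma rest_adj_in_V: "rest_adj v w \<Longrightarrow> v \<in> V \<and> w \<in> V"
  using adj_in_verts[OF pair_graph_S] unfolding adj_S_eq add_edge_def by blast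

lemma rest_adj_inner_iff:
  assumes "rest_adj v w" "d \<le> 2"
  shows "v \<in> inner d \<longleftrightarrow> w \<in> inner d"
proof -
  obtain x y where xy: "rest_base_adj x y" "v = glue x" "w = glue y"
    using assms(1) unfolding rest_adj_def by blast
  have same_leg: "leg x = leg y"
    using xy(1) unfolding rest_base_adj_def by auto
  have "v \<in> V" "w \<in> V"
    using rest_adj_in_V[OF assms(1)] by simp_all
  show ?thesis
  proof (cases "leg x < 2")
    case True
    then show ?thesis
      using glue_rest_ne_center[OF xy(1)] leg_glue same_leg xy \<open>v \<in> V\<close> \<open>w \<in> V\<close>
      unfolding inner_def by auto
  next
    case False
    have "glue z \<notin> inner d" if "2 \<le> leg z" for z
      using leg_glue[of z] that assms(2) unfolding inner_def by auto
    then show ?thesis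
      using False same_leg xy(2,3) by simp
  qed
qed

lemma inner_1_iff: "v \<in> inner 1 \<longleftrightarrow>
    (\<exists>x. v = Inl (0, x) \<and> x \<in> verts (fst (Gs ! 0))) \<or> (\<exists>j. v = Inr (0, j) \<and> 0 < j \<and> j < \<tau> ! 0)"
  unfolding inner_def V_iff using first_legs_pos three_pieces by (auto simp: spider_center_def)

lemma inner_2_iff: "v \<in> inner 2 \<longleftrightarrow>
    (\<exists>x. v = Inl (0, x) \<and> x \<in> verts (fst (Gs ! 0))) \<or> (\<exists>x. v = Inl (1, x) \<and> x \<in> verts (fst (Gs ! 1))) \<or>
    (\<exists>j. v = Inr (0, j) \<and> 0 < j \<and> j < \<tau> ! 0) \<or> (\<exists>j. v = Inr (1, j) \<and> 0 < j \<and> j < \<tau> ! 1)"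
  unfolding inner_def V_iff using first_legs_pos three_pieces
  by (auto simp: spider_center_def less_2_cases_iff)

lemma leg_lt_of_glue_in_inner: "glue x \<in> inner d \<Longrightarrow> leg x < d"
  using leg_glue unfolding inner_def by fastforce

lemma rest_adj_graph:
  assumes "i < length Gs" "adj (fst (Gs ! i)) x y"
  shows "rest_adj (glue (Inl (i, x))) (glue (Inl (i, y)))"
proof (rule rest_adjI)
  show "rest_base_adj (Inl (i, x)) (Inl (i, y))"
    using assms unfolding rest_base_adj_def by blast
  show "glue (Inl (i, x)) \<noteq> glue (Inl (i, y))"
    using assms(2) by (auto simp: spider_center_def)
qed

lemma rest_adj_leg:
  assumes "i < 2" "1 \<le> j" "j < \<tau> ! i"
  shows "rest_adj (glue (Inr (i, j))) (glue (Inr (i, Suc j)))"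
    "rest_adj (glue (Inr (i, Suc j))) (glue (Inr (i, j)))"
proof -
  have "rest_base_adj (Inr (i, j)) (Inr (i, Suc j))" "rest_base_adj (Inr (i, Suc j)) (Inr (i, j))"
    using assms three_pieces less_trans[of i 2 "length Gs"] unfolding rest_base_adj_def by blast+
  moreover have "glue (Inr (i, j)) \<noteq> glue (Inr (i, Suc j))"
    using assms by auto
  ultimately show "rest_adj (glue (Inr (i, j))) (glue (Inr (i, Suc j)))"
    "rest_adj (glue (Inr (i, Suc j))) (glue (Inr (i, j)))"
    using rest_adjI by metis+
qed

abbreviation "Q \<equiv> pendant (\<tau> ! 0 - 1) (Gs ! 0)"
abbreviation "glue_Q \<equiv> path_glue (\<tau> ! 0 - 1) (Gs ! 0) K1"

text \<open>Position \<open>j\<close> of leg 0 of \<open>S\<close> is position \<open>\<tau> ! 0 - j\<close> of the pendant path of \<open>Q\<close>,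
  whose free end \<open>Inl (1, undefined)\<close> (the vertex of \<open>K1\<close>) corresponds to \<open>a\<close>.\<close>
definition from_Q :: "'a svert \<Rightarrow> 'a svert" where
  "from_Q p = (case p of Inl (i, x) \<Rightarrow> if i = 0 then Inl (0, x) else a | Inr (_, j) \<Rightarrow> Inr (0, \<tau> ! 0 - j))"

definition to_Q :: "'a svert \<Rightarrow> 'a svert" where
  "to_Q v = (case v of Inl (_, x) \<Rightarrow> Inl (0, x)
     | Inr (_, j) \<Rightarrow> if j = 1 then Inl (1, undefined) else Inr (0, \<tau> ! 0 - j))"

lemma from_Q_simps [simp]:
  "from_Q (Inl (i, x)) = (if i = 0 then Inl (0, x) else a)" "from_Q (Inr (i, j)) = Inr (0, \<tau> ! 0 - j)"
  by (simp_all add: from_Q_def)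

lemma to_Q_simps [simp]:
  "to_Q (Inl (i, x)) = Inl (0, x)"
  "to_Q (Inr (i, j)) = (if j = 1 then Inl (1, undefined) else Inr (0, \<tau> ! 0 - j))"
  by (simp_all add: to_Q_def)

lemma verts_Q_iff: "p \<in> verts Q \<longleftrightarrow> (\<exists>x. p = Inl (0, x) \<and> x \<in> verts (fst (Gs ! 0))) \<or>
    (p = Inl (1, undefined) \<and> 2 \<le> \<tau> ! 0) \<or> (\<exists>j. p = Inr (0, j) \<and> 0 < j \<and> j < \<tau> ! 0 - 1)"
  unfolding pendant_def using root_in_piece three_pieces first_legs_pos
  by (subst verts_Pk_iff) auto

lemma adj_Q_base_iff: "adj (path_base (\<tau> ! 0 - 1) (Gs ! 0) K1) x y \<longleftrightarrow>
    (\<exists>x0 y0. adj (fst (Gs ! 0)) x0 y0 \<and> x = Inl (0, x0) \<and> y = Inl (0, y0)) \<or>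
    (\<exists>j. j < \<tau> ! 0 - 1 \<and> (x = Inr (0, j) \<and> y = Inr (0, Suc j) \<or> x = Inr (0, Suc j) \<and> y = Inr (0, j)))"
  using pair_graph_piece three_pieces pair_graph_K1 by (subst adj_path_base) auto

lemma from_glue_Q:
  "from_Q (glue_Q (Inl (0, x))) = glue (Inl (0, x))"
  "j \<le> \<tau> ! 0 - 1 \<Longrightarrow> from_Q (glue_Q (Inr (0, j))) = glue (Inr (0, \<tau> ! 0 - j))"
  using first_legs_pos three_pieces by auto

lemma to_glue_Q:
  "to_Q (glue (Inl (0, x))) = glue_Q (Inl (0, x))"
  "1 \<le> j \<Longrightarrow> j \<le> \<tau> ! 0 \<Longrightarrow> to_Q (glue (Inr (0, j))) = glue_Q (Inr (0, \<tau> ! 0 - j))"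
  using first_legs_pos three_pieces by auto

lemma adj_Q_imp_rest_adj:
  assumes "adj Q p q"
  shows "rest_adj (from_Q p) (from_Q q)"
proof -
  obtain x y where xy: "adj (path_base (\<tau> ! 0 - 1) (Gs ! 0) K1) x y" "p = glue_Q x" "q = glue_Q y"
    using assms unfolding pendant_def adj_Pk by blast
  from xy(1) show ?thesis
    unfolding adj_Q_base_iff
  proof (elim disjE exE conjE)
    fix x0 y0 assume "adj (fst (Gs ! 0)) x0 y0" "x = Inl (0, x0)" "y = Inl (0, y0)"
    then show ?thesis
      using rest_adj_graph[of 0 x0 y0] three_pieces xy(2,3) by (simp only: from_glue_Q(1))
  next
    fix j assume "j < \<tau> ! 0 - 1" "x = Inr (0, j)" "y = Inr (0, Suc j)"
    then show ?thesis
      using rest_adj_leg(2)[of 0 "\<tau> ! 0 - Suc j"] xy(2,3) from_glue_Q(2)[of j] from_glue_Q(2)[of "Suc j"]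
      by (simp add: Suc_diff_Suc)
  next
    fix j assume "j < \<tau> ! 0 - 1" "x = Inr (0, Suc j)" "y = Inr (0, j)"
    then show ?thesis
      using rest_adj_leg(1)[of 0 "\<tau> ! 0 - Suc j"] xy(2,3) from_glue_Q(2)[of j] from_glue_Q(2)[of "Suc j"]
      by (simp add: Suc_diff_Suc)
  qed
qed

lemma from_to_Q: "v \<in> inner 1 \<Longrightarrow> from_Q (to_Q v) = v"
  unfolding inner_1_iff using first_legs_pos by auto

lemma to_from_Q: "p \<in> verts Q \<Longrightarrow> to_Q (from_Q p) = p"
  unfolding verts_Q_iff using first_legs_pos by auto

lemma to_Q_in_Q: "v \<in> inner 1 \<Longrightarrow> to_Q v \<in> verts Q"
  unfolding inner_1_iff verts_Q_iff using first_legs_pos by (auto split: if_splits)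

lemma from_Q_in_inner: "p \<in> verts Q \<Longrightarrow> from_Q p \<in> inner 1"
  unfolding inner_1_iff verts_Q_iff using first_legs_pos by auto

lemma adj_Q_to_QI:
  assumes "v \<in> inner 1" "w \<in> inner 1" "v \<noteq> w"
    and "adj (path_base (\<tau> ! 0 - 1) (Gs ! 0) K1) x y" "to_Q v = glue_Q x" "to_Q w = glue_Q y"
  shows "adj Q (to_Q v) (to_Q w)"
proof -
  have "to_Q v \<noteq> to_Q w"
    using from_to_Q assms(1-3) by metis
  then show ?thesis
    using adj_PkI[OF assms(4)] assms(5,6) by (simp add: pendant_def)
qed

lemma rest_adj_imp_adj_Q:
  assumes v: "v \<in> inner 1" and w: "w \<in> inner 1" and vw: "rest_adj v w"
  shows "adj Q (to_Q v) (to_Q w)"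
proof -
  obtain x y where xy: "rest_base_adj x y" "v = glue x" "w = glue y" "v \<noteq> w"
    using vw unfolding rest_adj_def by blast
  note edge = adj_Q_to_QI[OF v w xy(4)]
  from xy(1) show ?thesis
  proof (cases rule: rest_base_adj_cases)
    case (graph0 x0 y0)
    then show ?thesis
      using edge[of "Inl (0, x0)" "Inl (0, y0)"] xy(2,3) to_glue_Q(1)
      unfolding adj_Q_base_iff by simp
  next
    case (leg0 j)
    then have "to_Q (glue (Inr (0, j))) = glue_Q (Inr (0, Suc (\<tau> ! 0 - Suc j)))"
      "to_Q (glue (Inr (0, Suc j))) = glue_Q (Inr (0, \<tau> ! 0 - Suc j))"
      "\<tau> ! 0 - Suc j < \<tau> ! 0 - 1"
      using to_glue_Q(2)[of j] to_glue_Q(2)[of "Suc j"]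
      by (simp_all del: spider_glue.simps path_glue.simps add: Suc_diff_Suc)
    then show ?thesis
      using edge leg0(3) xy(2,3) unfolding adj_Q_base_iff by metis
  qed (use v w xy(2,3) leg_lt_of_glue_in_inner in fastforce)+
qed

lemma csf_Q: "csf Q = csf_rel (inner 1) rest_adj"
proof (rule csf_eq_csf_rel_iso[where f = to_Q and g = from_Q])
  show "pair_graph Q"
    unfolding pendant_def using pair_graph_piece three_pieces pair_graph_K1 by (intro pair_graph_Pk) auto
  show "finite (inner 1)"
    using finite_V by (simp add: inner_def)
qed (use to_Q_in_Q from_Q_in_inner from_to_Q to_from_Q rest_adj_imp_adj_Q adj_Q_imp_rest_adj in auto)

abbreviation "P \<equiv> Pk (\<tau> ! 0 + \<tau> ! 1 - 1) (Gs ! 0) (Gs ! 1)"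
abbreviation "glue_P \<equiv> path_glue (\<tau> ! 0 + \<tau> ! 1 - 1) (Gs ! 0) (Gs ! 1)"

text \<open>The path of \<open>P\<close> runs from the root of \<open>Gs ! 0\<close> along leg 0 of \<open>S\<close> backwards to \<open>a\<close>, then
  along the new edge \<open>a b\<close> and leg 1 forwards to the root of \<open>Gs ! 1\<close>.\<close>
definition from_P :: "'a svert \<Rightarrow> 'a svert" where
  "from_P p = (case p of Inl (i, x) \<Rightarrow> Inl (i, x)
     | Inr (_, j) \<Rightarrow> if j < \<tau> ! 0 then Inr (0, \<tau> ! 0 - j) else Inr (1, j + 1 - \<tau> ! 0))"

definition to_P :: "'a svert \<Rightarrow> 'a svert" where
  "to_P v = (case v of Inl (i, x) \<Rightarrow> Inl (i, x)
     | Inr (i, j) \<Rightarrow> if i = 0 then Inr (0, \<tau> ! 0 - j) else Inr (0, j + \<tau> ! 0 - 1))"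

lemma from_P_simps [simp]:
  "from_P (Inl (i, x)) = Inl (i, x)"
  "from_P (Inr (i, j)) = (if j < \<tau> ! 0 then Inr (0, \<tau> ! 0 - j) else Inr (1, j + 1 - \<tau> ! 0))"
  by (simp_all add: from_P_def)

lemma to_P_simps [simp]:
  "to_P (Inl (i, x)) = Inl (i, x)"
  "to_P (Inr (i, j)) = (if i = 0 then Inr (0, \<tau> ! 0 - j) else Inr (0, j + \<tau> ! 0 - 1))"
  by (simp_all add: to_P_def)

lemma verts_P_iff: "p \<in> verts P \<longleftrightarrow> (\<exists>x. p = Inl (0, x) \<and> x \<in> verts (fst (Gs ! 0))) \<or>
    (\<exists>x. p = Inl (1, x) \<and> x \<in> verts (fst (Gs ! 1))) \<or>
    (\<exists>j. p = Inr (0, j) \<and> 0 < j \<and> j < \<tau> ! 0 + \<tau> ! 1 - 1)"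
  using root_in_piece three_pieces first_legs_pos by (subst verts_Pk_iff) auto

lemma adj_P_base_iff: "adj (path_base (\<tau> ! 0 + \<tau> ! 1 - 1) (Gs ! 0) (Gs ! 1)) x y \<longleftrightarrow>
    (\<exists>x0 y0. adj (fst (Gs ! 0)) x0 y0 \<and> x = Inl (0, x0) \<and> y = Inl (0, y0)) \<or>
    (\<exists>x0 y0. adj (fst (Gs ! 1)) x0 y0 \<and> x = Inl (1, x0) \<and> y = Inl (1, y0)) \<or>
    (\<exists>j. j < \<tau> ! 0 + \<tau> ! 1 - 1 \<and>
       (x = Inr (0, j) \<and> y = Inr (0, Suc j) \<or> x = Inr (0, Suc j) \<and> y = Inr (0, j)))"
  using pair_graph_piece three_pieces by (subst adj_path_base) auto

lemma from_glue_P: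
  "i < 2 \<Longrightarrow> from_P (glue_P (Inl (i, x))) = glue (Inl (i, x))"
  "j \<le> \<tau> ! 0 + \<tau> ! 1 - 1 \<Longrightarrow> from_P (glue_P (Inr (0, j))) =
     (if j < \<tau> ! 0 then glue (Inr (0, \<tau> ! 0 - j)) else glue (Inr (1, j + 1 - \<tau> ! 0)))"
  using first_legs_pos three_pieces by (auto simp: less_2_cases_iff)

lemma to_glue_P:
  "i < 2 \<Longrightarrow> to_P (glue (Inl (i, x))) = glue_P (Inl (i, x))"
  "1 \<le> j \<Longrightarrow> j \<le> \<tau> ! 0 \<Longrightarrow> to_P (glue (Inr (0, j))) = glue_P (Inr (0, \<tau> ! 0 - j))"
  "1 \<le> j \<Longrightarrow> j \<le> \<tau> ! 1 \<Longrightarrow> to_P (glue (Inr (1, j))) = glue_P (Inr (0, j + \<tau> ! 0 - 1))"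
  using first_legs_pos three_pieces by (auto simp: less_2_cases_iff)

lemma from_to_P: "v \<in> inner 2 \<Longrightarrow> from_P (to_P v) = v"
  unfolding inner_2_iff using first_legs_pos by auto

lemma to_from_P: "p \<in> verts P \<Longrightarrow> to_P (from_P p) = p"
  unfolding verts_P_iff using first_legs_pos by auto

lemma to_P_in_P: "v \<in> inner 2 \<Longrightarrow> to_P v \<in> verts P"
  unfolding inner_2_iff verts_P_iff using first_legs_pos by auto

lemma from_P_in_inner: "p \<in> verts P \<Longrightarrow> from_P p \<in> inner 2"
  unfolding inner_2_iff verts_P_iff using first_legs_pos by (auto split: if_splits)

lemma from_P_path_step:
  assumes "j < \<tau> ! 0 + \<tau> ! 1 - 1"
  shows "add_edge rest_adj a b (from_P (glue_P (Inr (0, j)))) (from_P (glue_P (Inr (0, Suc j)))) \<and>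
    add_edge rest_adj a b (from_P (glue_P (Inr (0, Suc j)))) (from_P (glue_P (Inr (0, j))))"
proof -
  have j: "from_P (glue_P (Inr (0, j))) = (if j < \<tau> ! 0 then glue (Inr (0, \<tau> ! 0 - j)) else glue (Inr (1, j + 1 - \<tau> ! 0)))"
    "from_P (glue_P (Inr (0, Suc j))) = (if Suc j < \<tau> ! 0 then glue (Inr (0, \<tau> ! 0 - Suc j))
       else glue (Inr (1, Suc j + 1 - \<tau> ! 0)))"
    using assms from_glue_P(2)[of j] from_glue_P(2)[of "Suc j"] by simp_all
  consider "Suc j < \<tau> ! 0" | "Suc j = \<tau> ! 0" | "\<tau> ! 0 \<le> j"
    by linarith
  then show ?thesis
  proof cases
    case 1
    then have "from_P (glue_P (Inr (0, j))) = glue (Inr (0, Suc (\<tau> ! 0 - Suc j)))"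
      "from_P (glue_P (Inr (0, Suc j))) = glue (Inr (0, \<tau> ! 0 - Suc j))"
      using j by (simp_all del: spider_glue.simps path_glue.simps add: Suc_diff_Suc)
    then show ?thesis
      using 1 rest_adj_leg[of 0 "\<tau> ! 0 - Suc j"] unfolding add_edge_def
      by (simp del: spider_glue.simps path_glue.simps)
  next
    case 2
    then have "\<tau> ! 0 - j = 1" "\<not> Suc j < \<tau> ! 0" "Suc j + 1 - \<tau> ! 0 = 1"
      by simp_all
    then have "from_P (glue_P (Inr (0, j))) = a" "from_P (glue_P (Inr (0, Suc j))) = b"
      using j 2 by (simp_all del: spider_glue.simps path_glue.simps)
    then show ?thesis
      unfolding add_edge_def by (simp del: spider_glue.simps path_glue.simps)
  next
    case 3
    then have "from_P (glue_P (Inr (0, j))) = glue (Inr (1, j + 1 - \<tau> ! 0))"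
      "from_P (glue_P (Inr (0, Suc j))) = glue (Inr (1, Suc (j + 1 - \<tau> ! 0)))"
      using j by (simp_all del: spider_glue.simps path_glue.simps add: Suc_diff_le)
    then show ?thesis
      using 3 assms rest_adj_leg[of 1 "j + 1 - \<tau> ! 0"] unfolding add_edge_def
      by (simp del: spider_glue.simps path_glue.simps)
  qed
qed

lemma adj_P_imp_add_edge_rest_adj:
  assumes "adj P p q"
  shows "add_edge rest_adj a b (from_P p) (from_P q)"
proof -
  obtain x y where xy: "adj (path_base (\<tau> ! 0 + \<tau> ! 1 - 1) (Gs ! 0) (Gs ! 1)) x y" "p = glue_P x" "q = glue_P y"
    using assms unfolding adj_Pk by blast
  from xy(1) show ?thesis
    unfolding adj_P_base_iff
  proof (elim disjE exE conjE)
    fix x0 y0 assume "adj (fst (Gs ! 0)) x0 y0" "x = Inl (0, x0)" "y = Inl (0, y0)"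
    then show ?thesis
      using rest_adj_graph[of 0 x0 y0] three_pieces xy(2,3) from_glue_P(1)[of 0] by (simp add: add_edge_def)
  next
    fix x0 y0 assume "adj (fst (Gs ! 1)) x0 y0" "x = Inl (1, x0)" "y = Inl (1, y0)"
    then show ?thesis
      using rest_adj_graph[of 1 x0 y0] three_pieces xy(2,3) from_glue_P(1)[of 1] by (simp add: add_edge_def)
  qed (use from_P_path_step xy(2,3) in auto)
qed

lemma adj_P_to_PI:
  assumes "v \<in> inner 2" "w \<in> inner 2" "v \<noteq> w"
    and "adj (path_base (\<tau> ! 0 + \<tau> ! 1 - 1) (Gs ! 0) (Gs ! 1)) x y" "to_P v = glue_P x" "to_P w = glue_P y"
  shows "adj P (to_P v) (to_P w)"
proof -
  have "to_P v \<noteq> to_P w"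
    using from_to_P assms(1-3) by metis
  then show ?thesis
    using adj_PkI[OF assms(4)] assms(5,6) by simp
qed

lemma adj_P_base_path:
  assumes "j < \<tau> ! 0 + \<tau> ! 1 - 1"
  shows "adj (path_base (\<tau> ! 0 + \<tau> ! 1 - 1) (Gs ! 0) (Gs ! 1)) (Inr (0, j)) (Inr (0, Suc j))"
    "adj (path_base (\<tau> ! 0 + \<tau> ! 1 - 1) (Gs ! 0) (Gs ! 1)) (Inr (0, Suc j)) (Inr (0, j))"
  using assms unfolding adj_P_base_iff by blast+

lemma rest_adj_imp_adj_P:
  assumes v: "v \<in> inner 2" and w: "w \<in> inner 2" and vw: "rest_adj v w"
  shows "adj P (to_P v) (to_P w)"
proof -
  obtain x y where xy: "rest_base_adj x y" "v = glue x" "w = glue y" "v \<noteq> w"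
    using vw unfolding rest_adj_def by blast
  note edge = adj_P_to_PI[OF v w xy(4)]
  from xy(1) show ?thesis
  proof (cases rule: rest_base_adj_cases)
    case (graph0 x0 y0)
    then show ?thesis
      using edge[of "Inl (0, x0)" "Inl (0, y0)"] xy(2,3) to_glue_P(1)[of 0]
      unfolding adj_P_base_iff by simp
  next
    case (graph1 x0 y0)
    then show ?thesis
      using edge[of "Inl (1, x0)" "Inl (1, y0)"] xy(2,3) to_glue_P(1)[of 1]
      unfolding adj_P_base_iff by simp
  next
    case (leg0 j)
    then have "to_P (glue (Inr (0, j))) = glue_P (Inr (0, Suc (\<tau> ! 0 - Suc j)))"
      "to_P (glue (Inr (0, Suc j))) = glue_P (Inr (0, \<tau> ! 0 - Suc j))"
      "\<tau> ! 0 - Suc j < \<tau> ! 0 + \<tau> ! 1 - 1"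
      using to_glue_P(2)[of j] to_glue_P(2)[of "Suc j"]
      by (simp_all del: spider_glue.simps path_glue.simps add: Suc_diff_Suc)
    then show ?thesis
      using edge leg0(3) xy(2,3) adj_P_base_path by metis
  next
    case (leg1 j)
    then have "to_P (glue (Inr (1, j))) = glue_P (Inr (0, j + \<tau> ! 0 - 1))"
      "to_P (glue (Inr (1, Suc j))) = glue_P (Inr (0, Suc (j + \<tau> ! 0 - 1)))"
      "j + \<tau> ! 0 - 1 < \<tau> ! 0 + \<tau> ! 1 - 1"
      using to_glue_P(3)[of j] to_glue_P(3)[of "Suc j"] first_legs_pos
      by (simp_all del: spider_glue.simps path_glue.simps)
    then show ?thesis
      using edge leg1(3) xy(2,3) adj_P_base_path by metis
  next
    case outer
    then show ?thesis
      using v xy(2) leg_lt_of_glue_in_inner by fastforce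
  qed
qed

lemma add_edge_rest_adj_imp_adj_P:
  assumes v: "v \<in> inner 2" and w: "w \<in> inner 2" and vw: "add_edge rest_adj a b v w"
  shows "adj P (to_P v) (to_P w)"
proof -
  have to_a_b: "to_P a = glue_P (Inr (0, \<tau> ! 0 - 1))" "to_P b = glue_P (Inr (0, Suc (\<tau> ! 0 - 1)))"
    using to_glue_P(2)[of 1] to_glue_P(3)[of 1] first_legs_pos by simp_all
  have "\<tau> ! 0 - 1 < \<tau> ! 0 + \<tau> ! 1 - 1"
    using first_legs_pos by linarith
  then show ?thesis
    using vw rest_adj_imp_adj_P[OF v w] adj_P_to_PI[OF v w] adj_P_base_path to_a_b a_b_c_distinct
    unfolding add_edge_def by metis
qed

lemma csf_P: "csf P = csf_rel (inner 2) (add_edge rest_adj a b)"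
proof (rule csf_eq_csf_rel_iso[where f = to_P and g = from_P])
  show "pair_graph P"
    using pair_graph_piece three_pieces by (intro pair_graph_Pk) auto
  show "finite (inner 2)"
    using finite_V by (simp add: inner_def)
qed (use to_P_in_P from_P_in_inner from_to_P to_from_P add_edge_rest_adj_imp_adj_P
       adj_P_imp_add_edge_rest_adj in auto)

abbreviation "H \<equiv> spider (drop 2 \<tau>) (drop 2 Gs)"
abbreviation "T_legs \<equiv> [\<tau> ! 0 - 1, \<tau> ! 1, 1]"
abbreviation "T_pieces \<equiv> [rmap Inl (Gs ! 0), rmap Inl (Gs ! 1), rmap Inr (H, c)]"
abbreviation "T \<equiv> spider T_legs T_pieces"
abbreviation "glue_T \<equiv> spider_glue T_legs T_pieces"

text \<open>\<open>T\<close> is \<open>S\<close> with the edge \<open>c b\<close> replaced by \<open>a b\<close>: its centre is \<open>a\<close>, and \<open>H\<close>, the part of \<open>S\<close>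
  beyond \<open>c\<close>, hangs from \<open>a\<close> by the edge \<open>a c\<close>.\<close>
definition from_T :: "('a + 'a svert) svert \<Rightarrow> 'a svert" where
  "from_T p = (case p of Inl (i, Inl x) \<Rightarrow> Inl (i, x) | Inl (_, Inr h) \<Rightarrow> shift_vert 2 h
     | Inr (i, j) \<Rightarrow> if j = 0 then a else if i = 0 then Inr (0, j + 1) else Inr (1, j))"

definition to_T :: "'a svert \<Rightarrow> ('a + 'a svert) svert" where
  "to_T v = (if v = c \<or> 2 \<le> leg v then Inl (2, Inr (unshift_vert 2 v))
     else if v = a then spider_center
     else case v of Inl (i, x) \<Rightarrow> Inl (i, Inl x) | Inr (i, j) \<Rightarrow> Inr (i, if i = 0 then j - 1 else j))"

lemma from_T_simps [simp]:
  "from_T (Inl (i, Inl x)) = Inl (i, x)" "from_T (Inl (i, Inr h)) = shift_vert 2 h"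
  "from_T (Inr (i, j)) = (if j = 0 then a else if i = 0 then Inr (0, j + 1) else Inr (1, j))"
  by (simp_all add: from_T_def)

lemma verts_T_iff: "p \<in> verts T \<longleftrightarrow> p = spider_center \<or>
    (\<exists>x. p = Inl (0, Inl x) \<and> x \<in> verts (fst (Gs ! 0)) \<and> \<not> (x = snd (Gs ! 0) \<and> \<tau> ! 0 = 1)) \<or>
    (\<exists>x. p = Inl (1, Inl x) \<and> x \<in> verts (fst (Gs ! 1))) \<or>
    (\<exists>h. p = Inl (2, Inr h) \<and> h \<in> verts H) \<or>
    (\<exists>j. p = Inr (0, j) \<and> 0 < j \<and> j < \<tau> ! 0 - 1) \<or>
    (\<exists>j. p = Inr (1, j) \<and> 0 < j \<and> j < \<tau> ! 1)"
    (is "_ \<longleftrightarrow> ?rhs")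
proof -
  have roots: "snd (T_pieces ! i) \<in> verts (fst (T_pieces ! i))" if "i < length T_pieces" for i
    using that root_in_piece three_pieces by (auto simp: less_Suc_eq verts_spider)
  have "p \<in> verts T \<longleftrightarrow> p = spider_center \<or>
    (\<exists>i x. p = Inl (i, x) \<and> i < length T_pieces \<and> x \<in> verts (fst (T_pieces ! i)) \<and>
       \<not> (x = snd (T_pieces ! i) \<and> T_legs ! i = 0)) \<or>
    (\<exists>i j. p = Inr (i, j) \<and> i < length T_pieces \<and> 0 < j \<and> j < T_legs ! i)"
    by (rule verts_spider_iff[where \<tau> = T_legs, OF roots])
  also have "\<dots> \<longleftrightarrow> ?rhs"
    using first_legs_pos by (simp add: less_Suc_eq ex_disj_distrib conj_disj_distribR)
      (auto simp: spider_center_def)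
  finally show ?thesis .
qed

lemma pair_graph_H: "pair_graph H"
  using pair_graph_piece three_pieces by (intro pair_graph_spider) auto

lemma pair_graph_T_pieces: "i < length T_pieces \<Longrightarrow> pair_graph (fst (T_pieces ! i))"
proof -
  have "pair_graph (gmap Inl (fst (Gs ! 0)))" "pair_graph (gmap Inl (fst (Gs ! 1)))" "pair_graph (gmap Inr H)"
    using pair_graph_gmap pair_graph_piece three_pieces pair_graph_H by blast+
  then show "i < length T_pieces \<Longrightarrow> pair_graph (fst (T_pieces ! i))"
    by (auto simp: less_Suc_eq)
qed

lemma adj_T_base_iff: "adj (spider_base T_legs T_pieces) x y \<longleftrightarrow>
    (\<exists>x0 y0. adj (fst (Gs ! 0)) x0 y0 \<and> x = Inl (0, Inl x0) \<and> y = Inl (0, Inl y0)) \<or>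
    (\<exists>x0 y0. adj (fst (Gs ! 1)) x0 y0 \<and> x = Inl (1, Inl x0) \<and> y = Inl (1, Inl y0)) \<or>
    (\<exists>h1 h2. adj H h1 h2 \<and> x = Inl (2, Inr h1) \<and> y = Inl (2, Inr h2)) \<or>
    (\<exists>j. j < \<tau> ! 0 - 1 \<and> (x = Inr (0, j) \<and> y = Inr (0, Suc j) \<or> x = Inr (0, Suc j) \<and> y = Inr (0, j))) \<or>
    (\<exists>j. j < \<tau> ! 1 \<and> (x = Inr (1, j) \<and> y = Inr (1, Suc j) \<or> x = Inr (1, Suc j) \<and> y = Inr (1, j))) \<or>
    (x = Inr (2, 0) \<and> y = Inr (2, 1) \<or> x = Inr (2, 1) \<and> y = Inr (2, 0))"
    (is "_ \<longleftrightarrow> ?rhs")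
proof -
  have "adj (spider_base T_legs T_pieces) x y \<longleftrightarrow> (\<exists>i<3.
      (\<exists>x0 y0. adj (fst (T_pieces ! i)) x0 y0 \<and> x = Inl (i, x0) \<and> y = Inl (i, y0)) \<or>
      (\<exists>j<T_legs ! i. x = Inr (i, j) \<and> y = Inr (i, Suc j) \<or> x = Inr (i, Suc j) \<and> y = Inr (i, j)))"
    using adj_spider_base[where \<tau> = T_legs, OF pair_graph_T_pieces, of x y] by (simp only: numeral_3_eq_3 length_Cons list.size) blast
  also have "\<dots> \<longleftrightarrow> ?rhs"
    unfolding numeral_3_eq_3 Ex_less_Suc2 by (auto simp: adj_gmap)
  finally show ?thesis .
qed

lemma from_glue_T:
  "from_T (glue_T (Inl (0, Inl x))) = glue (Inl (0, x))"
  "from_T (glue_T (Inl (1, Inl x))) = glue (Inl (1, x))"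
  "from_T (glue_T (Inl (2, Inr h))) = shift_vert 2 h"
  "j \<le> \<tau> ! 0 - 1 \<Longrightarrow> from_T (glue_T (Inr (0, j))) = glue (Inr (0, j + 1))"
  "j \<le> \<tau> ! 1 \<Longrightarrow> from_T (glue_T (Inr (1, j))) = (if j = 0 then a else glue (Inr (1, j)))"
  "from_T (glue_T (Inr (2, 0))) = a" "from_T (glue_T (Inr (2, 1))) = c"
  using first_legs_pos three_pieces by (auto simp: spider_center_def shift_vert_def)

lemma to_T_outer: "v \<in> outer 2 \<Longrightarrow> to_T v = Inl (2, Inr (unshift_vert 2 v))"
  unfolding outer_def to_T_def by auto

lemma to_glue_T:
  "to_T (glue (Inl (0, x))) = glue_T (Inl (0, Inl x))"
  "to_T (glue (Inl (1, x))) = glue_T (Inl (1, Inl x))"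
  "1 \<le> j \<Longrightarrow> j \<le> \<tau> ! 0 \<Longrightarrow> to_T (glue (Inr (0, j))) = glue_T (Inr (0, j - 1))"
  "1 \<le> j \<Longrightarrow> j \<le> \<tau> ! 1 \<Longrightarrow> to_T (glue (Inr (1, j))) = glue_T (Inr (1, j))"
  "to_T c = glue_T (Inr (2, 1))" "to_T a = glue_T (Inr (2, 0))" "glue_T (Inr (1, 0)) = glue_T (Inr (2, 0))"
  using first_legs_pos three_pieces by (auto simp: to_T_def spider_center_def)

lemma from_T_in_V: "p \<in> verts T \<Longrightarrow> from_T p \<in> V"
  unfolding verts_T_iff
proof (elim disjE exE conjE)
  fix h assume "p = Inl (2, Inr h)" "h \<in> verts H"
  then show ?thesis
    using shift_vert_in_outer[of 2 h] three_pieces by (simp add: outer_def)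
qed (use a_b_c_in_V first_legs_pos three_pieces in \<open>auto simp: V_iff spider_center_def\<close>)

lemma to_T_in_T: "v \<in> V \<Longrightarrow> to_T v \<in> verts T"
proof (cases "v \<in> outer 2")
  case True
  then show ?thesis
    using unshift_vert_in_S'[of 2 v] three_pieces to_T_outer unfolding verts_T_iff by simp
next
  case False
  moreover assume "v \<in> V"
  ultimately have "v \<in> inner 2"
    by (auto simp: inner_def outer_def)
  then show ?thesis
    unfolding inner_2_iff verts_T_iff using first_legs_pos
    by (auto simp: to_T_def spider_center_def)
qed

lemma from_to_T: "v \<in> V \<Longrightarrow> from_T (to_T v) = v"
proof (cases "v \<in> outer 2")
  case True
  then show ?thesis
    using shift_unshift_vert[of 2 v] three_pieces to_T_outer by simp
next
  case False
  moreover assume "v \<in> V"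
  ultimately have "v \<in> inner 2"
    by (auto simp: inner_def outer_def)
  then show ?thesis
    unfolding inner_2_iff using first_legs_pos
    by (auto simp: to_T_def spider_center_def)
qed

lemma to_from_T: "p \<in> verts T \<Longrightarrow> to_T (from_T p) = p"
  unfolding verts_T_iff
proof (elim disjE exE conjE)
  fix h assume "p = Inl (2, Inr h)" "h \<in> verts H"
  then show ?thesis
    using shift_vert_in_outer[of 2 h] unshift_shift_vert[of 2 h] three_pieces to_T_outer by simp
qed (use first_legs_pos in \<open>auto simp: to_T_def spider_center_def\<close>)

lemma rest_adj_sym: "rest_adj v w \<Longrightarrow> rest_adj w v"
  unfolding rest_adj_def rest_base_adj_def by (metis adj_sym)

lemma adj_S_outer_imp_rest_adj: "v \<in> outer 2 \<Longrightarrow> w \<in> outer 2 \<Longrightarrow> adj S v w \<Longrightarrow> rest_adj v w"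
  using a_b_c_distinct unfolding adj_S_eq add_edge_def outer_def by auto

lemma adj_H_imp_rest_adj:
  assumes "adj H h h'"
  shows "rest_adj (shift_vert 2 h) (shift_vert 2 h')"
proof -
  have "h \<in> verts H" "h' \<in> verts H"
    using adj_in_verts[OF pair_graph_H assms] by simp_all
  then have "shift_vert 2 h \<in> outer 2" "shift_vert 2 h' \<in> outer 2"
    using shift_vert_in_outer three_pieces by simp_all
  moreover have "adj S (shift_vert 2 h) (shift_vert 2 h')"
    using adj_S'_imp_adj_S[of 2] assms three_pieces by simp
  ultimately show ?thesis
    by (rule adj_S_outer_imp_rest_adj)
qed

lemma from_T_leg_steps:
  "j < \<tau> ! 0 - 1 \<Longrightarrow> add_edge (add_edge rest_adj c a) a b (from_T (glue_T (Inr (0, j)))) (from_T (glue_T (Inr (0, Suc j))))"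
  "j < \<tau> ! 1 \<Longrightarrow> add_edge (add_edge rest_adj c a) a b (from_T (glue_T (Inr (1, j)))) (from_T (glue_T (Inr (1, Suc j))))"
  "add_edge (add_edge rest_adj c a) a b (from_T (glue_T (Inr (2, 0)))) (from_T (glue_T (Inr (2, 1))))"
proof -
  show "j < \<tau> ! 0 - 1 \<Longrightarrow> add_edge (add_edge rest_adj c a) a b (from_T (glue_T (Inr (0, j)))) (from_T (glue_T (Inr (0, Suc j))))"
    using rest_adj_leg(1)[of 0 "Suc j"] from_glue_T(4)[of j] from_glue_T(4)[of "Suc j"]
    unfolding add_edge_def by (simp del: spider_glue.simps)
  show "j < \<tau> ! 1 \<Longrightarrow> add_edge (add_edge rest_adj c a) a b (from_T (glue_T (Inr (1, j)))) (from_T (glue_T (Inr (1, Suc j))))"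
    using rest_adj_leg(1)[of 1 j] from_glue_T(5)[of j] from_glue_T(5)[of "Suc j"] first_legs_pos
    unfolding add_edge_def by (cases "j = 0") (simp_all del: spider_glue.simps)
  show "add_edge (add_edge rest_adj c a) a b (from_T (glue_T (Inr (2, 0)))) (from_T (glue_T (Inr (2, 1))))"
    using from_glue_T(6,7) unfolding add_edge_def by (simp del: spider_glue.simps)
qed

lemma adj_T_imp_exchanged:
  assumes "adj T p q"
  shows "add_edge (add_edge rest_adj c a) a b (from_T p) (from_T q)"
proof -
  let ?R = "add_edge (add_edge rest_adj c a) a b"
  have sym: "?R v w \<Longrightarrow> ?R w v" for v w
    using rest_adj_sym unfolding add_edge_def by blast
  obtain x y where xy: "adj (spider_base T_legs T_pieces) x y" "p = glue_T x" "q = glue_T y"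
    using assms unfolding adj_spider by blast
  from xy(1) have "?R (from_T (glue_T x)) (from_T (glue_T y))"
    unfolding adj_T_base_iff
  proof (elim disjE exE conjE)
    fix x0 y0 assume "adj (fst (Gs ! 0)) x0 y0" "x = Inl (0, Inl x0)" "y = Inl (0, Inl y0)"
    then show ?thesis
      using rest_adj_graph[of 0 x0 y0] three_pieces from_glue_T(1) unfolding add_edge_def by simp
  next
    fix x0 y0 assume "adj (fst (Gs ! 1)) x0 y0" "x = Inl (1, Inl x0)" "y = Inl (1, Inl y0)"
    then show ?thesis
      using rest_adj_graph[of 1 x0 y0] three_pieces from_glue_T(2) unfolding add_edge_def by simp
  next
    fix h h' assume "adj H h h'" "x = Inl (2, Inr h)" "y = Inl (2, Inr h')"
    then show ?thesis
      using adj_H_imp_rest_adj from_glue_T(3) unfolding add_edge_def by simp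
  qed (use from_T_leg_steps sym in blast)+
  then show ?thesis
    by (simp only: xy(2,3))
qed

lemma rest_adj_outer_imp_adj_T:
  assumes "rest_base_adj x y" "2 \<le> leg x" "2 \<le> leg y" "glue x \<noteq> glue y"
  shows "adj T (to_T (glue x)) (to_T (glue y))"
proof -
  have in_outer: "glue z \<in> outer 2" if "2 \<le> leg z" "glue z \<in> V" for z
    by (cases "glue z = c") (simp_all add: outer_def leg_glue that a_b_c_in_V)
  have "rest_adj (glue x) (glue y)"
    using assms(1,4) by (rule rest_adjI)
  then have V: "glue x \<in> V" "glue y \<in> V" and "adj S (glue x) (glue y)"
    using rest_adj_in_V unfolding adj_S_eq add_edge_def by auto
  with assms(2,3) have "adj H (unshift_vert 2 (glue x)) (unshift_vert 2 (glue y))"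
    using adj_S_imp_adj_S'[of 2] in_outer three_pieces by simp
  then have "adj (spider_base T_legs T_pieces)
      (Inl (2, Inr (unshift_vert 2 (glue x)))) (Inl (2, Inr (unshift_vert 2 (glue y))))"
    unfolding adj_T_base_iff by blast
  moreover have "unshift_vert 2 (glue x) \<noteq> unshift_vert 2 (glue y)"
    using shift_unshift_vert[of 2] in_outer assms V three_pieces(3) by (metis less_imp_le)
  ultimately show ?thesis
    using adj_spiderI to_T_outer in_outer assms(2,3) V by fastforce
qed

lemma adj_T_to_TI:
  assumes "v \<in> V" "w \<in> V" "v \<noteq> w"
    and "adj (spider_base T_legs T_pieces) x y" "to_T v = glue_T x" "to_T w = glue_T y"
  shows "adj T (to_T v) (to_T w)"
proof -
  have "to_T v \<noteq> to_T w"
    using from_to_T assms(1-3) by metis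
  then show ?thesis
    using adj_spiderI[OF assms(4)] assms(5,6) by simp
qed

lemma rest_adj_imp_adj_T:
  assumes v: "v \<in> V" and w: "w \<in> V" and vw: "rest_adj v w"
  shows "adj T (to_T v) (to_T w)"
proof -
  obtain x y where xy: "rest_base_adj x y" "v = glue x" "w = glue y" "v \<noteq> w"
    using vw unfolding rest_adj_def by blast
  note edge = adj_T_to_TI[OF v w xy(4)]
  from xy(1) show ?thesis
  proof (cases rule: rest_base_adj_cases)
    case (graph0 x0 y0)
    then show ?thesis
      using edge[of "Inl (0, Inl x0)" "Inl (0, Inl y0)"] xy(2,3) to_glue_T(1)
      unfolding adj_T_base_iff by blast
  next
    case (graph1 x0 y0)
    then show ?thesis
      using edge[of "Inl (1, Inl x0)" "Inl (1, Inl y0)"] xy(2,3) to_glue_T(2)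
      unfolding adj_T_base_iff by blast
  next
    case (leg0 j)
    then have "to_T (glue (Inr (0, j))) = glue_T (Inr (0, j - 1))"
      "to_T (glue (Inr (0, Suc j))) = glue_T (Inr (0, Suc (j - 1)))" "j - 1 < \<tau> ! 0 - 1"
      using to_glue_T(3)[of j] to_glue_T(3)[of "Suc j"] by (simp_all del: spider_glue.simps)
    then show ?thesis
      using edge leg0(3) xy(2,3) unfolding adj_T_base_iff by metis
  next
    case (leg1 j)
    then have "to_T (glue (Inr (1, j))) = glue_T (Inr (1, j))"
      "to_T (glue (Inr (1, Suc j))) = glue_T (Inr (1, Suc j))"
      using to_glue_T(4)[of j] to_glue_T(4)[of "Suc j"] by (simp_all del: spider_glue.simps)
    then show ?thesis
      using edge leg1(2,3) xy(2,3) unfolding adj_T_base_iff by metis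
  next
    case outer
    then show ?thesis
      using rest_adj_outer_imp_adj_T xy by blast
  qed
qed

lemma exchanged_imp_adj_T:
  assumes v: "v \<in> V" and w: "w \<in> V" and vw: "add_edge (add_edge rest_adj c a) a b v w"
  shows "adj T (to_T v) (to_T w)"
proof -
  from vw consider "rest_adj v w" | "v = c" "w = a" | "v = a" "w = c" | "v = a" "w = b" | "v = b" "w = a"
    unfolding add_edge_def by blast
  then show ?thesis
  proof cases
    case 1
    then show ?thesis
      by (rule rest_adj_imp_adj_T[OF v w])
  next
    case 2
    then show ?thesis
      using adj_T_to_TI[OF v w, of "Inr (2, 1)" "Inr (2, 0)"] a_b_c_distinct to_glue_T(5,6)
      unfolding adj_T_base_iff by simp
  next
    case 3
    then show ?thesis
      using adj_T_to_TI[OF v w, of "Inr (2, 0)" "Inr (2, 1)"] a_b_c_distinct to_glue_T(5,6)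
      unfolding adj_T_base_iff by simp
  next
    case 4
    then show ?thesis
      using adj_T_to_TI[OF v w, of "Inr (1, 0)" "Inr (1, 1)"] a_b_c_distinct to_glue_T(4)[of 1]
        to_glue_T(6,7) first_legs_pos
      unfolding adj_T_base_iff by (simp del: spider_glue.simps)
  next
    case 5
    then show ?thesis
      using adj_T_to_TI[OF v w, of "Inr (1, 1)" "Inr (1, 0)"] a_b_c_distinct to_glue_T(4)[of 1]
        to_glue_T(6,7) first_legs_pos
      unfolding adj_T_base_iff by (simp del: spider_glue.simps)
  qed
qed

lemma csf_T: "csf T = csf_rel V (add_edge (add_edge rest_adj c a) a b)"
proof (rule csf_eq_csf_rel_iso[where f = to_T and g = from_T])
  show "pair_graph T"
    using pair_graph_T_pieces by (rule pair_graph_spider)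
qed (use finite_V to_T_in_T from_T_in_V from_to_T to_from_T exchanged_imp_adj_T
       adj_T_imp_exchanged in auto)

lemma csf_S: "csf S = csf_rel V (add_edge (add_edge rest_adj c a) c b)"
  using csf_eq_csf_rel[OF pair_graph_S] adj_S_eq by simp

lemma csf_rel_S_minus_ca: "csf_rel V (add_edge rest_adj c b) m = sf_times (csf Q) (csf (spider (tl \<tau>) (tl Gs))) m"
proof -
  have sides: "c \<notin> inner 1" "b \<notin> inner 1" "a \<notin> outer 1"
    using leg_a_b a_b_c_distinct by (auto simp: inner_def outer_def)
  have "csf_rel V (add_edge rest_adj c b) m
      = sf_times (csf_rel (inner 1) (add_edge rest_adj c b)) (csf_rel (outer 1) (add_edge rest_adj c b)) m"
    using rest_adj_inner_iff[of _ _ 1] sides unfolding add_edge_def by (intro csf_rel_inner_outer) auto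
  also have "csf_rel (inner 1) (add_edge rest_adj c b) = csf Q"
    unfolding csf_Q using sides by (intro csf_rel_cong) (auto simp: add_edge_def)
  also have "csf_rel (outer 1) (add_edge rest_adj c b) = csf_rel (outer 1) (adj S)"
    unfolding adj_S_eq using sides by (intro csf_rel_cong) (auto simp: add_edge_def)
  also have "\<dots> = csf (spider (tl \<tau>) (tl Gs))"
    using csf_spider_drop[of 1] three_pieces by (simp add: drop_Suc)
  finally show ?thesis .
qed

lemma csf_rel_S_minus_ca_cb_plus_ab: "csf_rel V (add_edge rest_adj a b) m = sf_times (csf P) (csf H) m"
proof -
  have sides: "a \<in> inner 2" "b \<in> inner 2" "a \<notin> outer 2" "b \<notin> outer 2"
    using leg_a_b a_b_c_distinct a_b_c_in_V by (auto simp: inner_def outer_def)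
  have "csf_rel V (add_edge rest_adj a b) m
      = sf_times (csf_rel (inner 2) (add_edge rest_adj a b)) (csf_rel (outer 2) (add_edge rest_adj a b)) m"
    using rest_adj_inner_iff[of _ _ 2] sides unfolding add_edge_def by (intro csf_rel_inner_outer) auto
  also have "csf_rel (inner 2) (add_edge rest_adj a b) = csf P"
    by (rule csf_P[symmetric])
  also have "csf_rel (outer 2) (add_edge rest_adj a b) = csf_rel (outer 2) (adj S)"
    unfolding adj_S_eq using sides by (intro csf_rel_cong) (auto simp: add_edge_def)
  also have "\<dots> = csf H"
    using csf_spider_drop[of 2] three_pieces by simp
  finally show ?thesis .
qed

theorem csf_spider_exchange:
  "csf S m = csf T m + sf_times (csf Q) (csf (spider (tl \<tau>) (tl Gs))) m - sf_times (csf P) (csf H) m"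
proof -
  have "csf S m + sf_times (csf P) (csf H) m = csf T m + sf_times (csf Q) (csf (spider (tl \<tau>) (tl Gs))) m"
    using csf_rel_add_edge_exchange[OF finite_V a_b_c_in_V, of rest_adj m]
    by (simp only: csf_S csf_T csf_rel_S_minus_ca csf_rel_S_minus_ca_cb_plus_ab)
  then show ?thesis
    by linarith
qed

end

theorem proposition4p1:
  fixes \<tau> :: "nat list" and Gs :: "('a graph \<times> 'a) list"
  assumes "length \<tau> = length Gs" and "length \<tau> \<ge> 3"
    and "\<tau> ! 0 \<ge> 1" and "\<tau> ! 1 \<ge> 1"
    and "\<forall>Gu\<in>set Gs. wf_rooted Gu"
  shows "let G = spider \<tau> Gs;
             H = spider (drop 2 \<tau>) (drop 2 Gs);
             T = spider [\<tau> ! 0 - 1, \<tau> ! 1, 1]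
                   [rmap Inl (Gs ! 0), rmap Inl (Gs ! 1), rmap Inr (H, spider_center)]
         in \<forall>m. csf G m
               = csf T m
                 + sf_times (csf (pendant (\<tau> ! 0 - 1) (Gs ! 0))) (csf (spider (tl \<tau>) (tl Gs))) m
                 - sf_times (csf (Pk (\<tau> ! 0 + \<tau> ! 1 - 1) (Gs ! 0) (Gs ! 1))) (csf H) m"
proof -
  interpret spider_split \<tau> Gs
    using assms by unfold_locales auto
  show ?thesis
    unfolding Let_def using csf_spider_exchange by blast
qed

end
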